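(* Let $\mathbf{k}$ be an admissible index and $\mathbf{k}'$ its dual index. Then $Z(\mathbf{k};\alpha,\beta)=Z(\mathbf{k}';\beta,\alpha)$ for all $\alpha,\beta\in\mathbb{C}$ with $\mathrm{Re}\,\alpha>0$ and $\mathrm{Re}\,\beta>0$.
   Context: An index $(k_1,\ldots,k_n)$ is admissible if all $k_i$ are positive integers and $k_n\ge2$. For $a\in\mathbb{C}$, $(a)_0=1$ and $(a)_m=a(a+1)\cdots(a+m-1)$ for $m\ge1$. For an admissible index and $\mathrm{Re}\,\alpha>0$, $\beta\notin\mathbb{Z}_{\le0}$, \[ Z(k_1,\ldots,k_n;\alpha,\beta)=\sum_{0\le m_1<\cdots<m_n}\frac{(\alpha)_{m_1}}{m_1!}\frac{m_n!}{(\alpha)_{m_n+1}}\frac{1}{(m_1+\beta)^{k_1}\cdots(m_{n-1}+\beta)^{k_{n-1}}(m_n+\beta)^{k_n-1}}. \] Every admissible index can be written uniquely as $(\{1\}^{a_1},b_1+2,\ldots,\{1\}^{a_s},b_s+2)$ with $a_j,b_j\in\mathbb{Z}_{\ge0}$ ($\{1\}^a$ meaning $a$ consecutive $1$'s); its dual index is $(\{1\}^{b_s},a_s+2,\ldots,\{1\}^{b_1},a_1+2)$. *)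

theory Defs
  imports "HOL-Analysis.Analysis"
begin

definition admissible :: "nat list \<Rightarrow> bool" where
  "admissible ks \<longleftrightarrow> ks \<noteq> [] \<and> (\<forall>k\<in>set ks. k \<ge> 1) \<and> last ks \<ge> 2"

definition idx_of_pairs :: "(nat \<times> nat) list \<Rightarrow> nat list" where
  "idx_of_pairs ps = concat (map (\<lambda>(a, b). replicate a 1 @ [b + 2]) ps)"

text \<open>Dual index: if k = (1^{a_1}, b_1+2, ..., 1^{a_s}, b_s+2) (unique decomposition),
its dual is (1^{b_s}, a_s+2, ..., 1^{b_1}, a_1+2).\<close>
definition dual_index :: "nat list \<Rightarrow> nat list" where
  "dual_index ks = idx_of_pairs (rev (map prod.swap (THE ps. idx_of_pairs ps = ks)))"

definition incr_tuples :: "nat \<Rightarrow> nat list set" where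
  "incr_tuples n = {ms. length ms = n \<and> sorted_wrt (<) ms}"

definition Z_term :: "nat list \<Rightarrow> complex \<Rightarrow> complex \<Rightarrow> nat list \<Rightarrow> complex" where
  "Z_term ks \<alpha> \<beta> ms =
     pochhammer \<alpha> (hd ms) / fact (hd ms) * (fact (last ms) / pochhammer \<alpha> (last ms + 1))
     * (\<Prod>i<length ks - 1. 1 / (of_nat (ms ! i) + \<beta>) ^ (ks ! i))
     * (1 / (of_nat (last ms) + \<beta>) ^ (last ks - 1))"

definition Z :: "nat list \<Rightarrow> complex \<Rightarrow> complex \<Rightarrow> complex" where
  "Z ks \<alpha> \<beta> = (\<Sum>\<^sub>\<infinity> ms \<in> incr_tuples (length ks). Z_term ks \<alpha> \<beta> ms)"

end

theory Submission
  imports Defs "HOL-Real_Asymp.Real_Asymp"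
begin

text \<open>
  The proof uses connected sums. For a pair of indices \<open>(k, l)\<close> one sums
  \<open>L\<^sub>k(m) C(m, n) L'\<^sub>l(n)\<close> over all \<open>m, n\<close>, where \<open>L\<^sub>k(m)\<close> is the part of the series
  \<open>Z(k; \<alpha>, \<beta>)\<close> whose last variable is \<open>m\<close>, \<open>L'\<^sub>l(n)\<close> the same for \<open>Z(l; \<beta>, \<alpha>)\<close>, and
  \<open>C(m, n) = (\<alpha>+1)\<^sub>n (\<beta>+1)\<^sub>m / (\<alpha>+\<beta>+1)\<^sub>m\<^sub>+\<^sub>n\<close> is the connector.
  Two summation formulas for the connector, a telescoping tail sum in \<open>n\<close> and
  \<open>\<Sum>\<^sub>n (\<beta>)\<^sub>n/n! C(m, n)/(n + \<alpha>) = \<kappa> m!/(\<alpha>)\<^sub>m\<^sub>+\<^sub>1\<close> with \<open>\<kappa> = \<Gamma>(\<alpha>+\<beta>+1)/(\<Gamma>(\<alpha>+1) \<Gamma>(\<beta>+1))\<close>,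
  show that the connected sum does not change when one unit is taken from the last entry of \<open>k\<close>
  and appended to \<open>l\<close> as a new last entry \<open>1\<close>. Repeating this moves \<open>k\<close> block by block to the
  other side, where it arrives as its dual \<open>k'\<close>; a connected sum with one side empty is \<open>\<kappa>\<close>
  times the series itself, so \<open>\<kappa> Z(k; \<alpha>, \<beta>) = \<kappa> Z(k'; \<beta>, \<alpha>)\<close>. Absolute convergence is carried
  along by running the same transformations for the real parts of \<open>\<alpha>\<close> and \<open>\<beta>\<close>.
\<close>

section \<open>Block decomposition of indices\<close>

lemma idx_of_pairs_Cons: "idx_of_pairs ((p, q) # ps) = replicate p 1 @ (q + 2) # idx_of_pairs ps"
  by (simp add: idx_of_pairs_def)

lemma idx_of_pairs_append: "idx_of_pairs (ps @ qs) = idx_of_pairs ps @ idx_of_pairs qs"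
  by (simp add: idx_of_pairs_def)

lemma idx_of_pairs_single: "idx_of_pairs [(p, q)] = replicate p 1 @ [q + 2]"
  by (simp add: idx_of_pairs_def)

lemma replicate_one_Cons_eq_iff:
  "replicate p (1::nat) @ (q + 2) # xs = replicate p' 1 @ (q' + 2) # ys \<longleftrightarrow> p = p' \<and> q = q' \<and> xs = ys"
proof (induction p arbitrary: p')
  case 0
  then show ?case by (cases p') auto
next
  case (Suc p)
  then show ?case by (cases p') auto
qed

lemma idx_of_pairs_inj: "idx_of_pairs ps = idx_of_pairs qs \<Longrightarrow> ps = qs"
proof (induction ps arbitrary: qs)
  case Nil
  then show ?case
    by (cases qs) (auto simp: idx_of_pairs_def)
next
  case (Cons pq ps)
  obtain p q where pq: "pq = (p, q)"
    by fastforce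
  obtain p' q' qs' where qs: "qs = (p', q') # qs'"
    using Cons.prems by (cases qs) (auto simp: pq idx_of_pairs_def)
  have "p = p' \<and> q = q' \<and> idx_of_pairs ps = idx_of_pairs qs'"
    using Cons.prems unfolding pq qs idx_of_pairs_Cons replicate_one_Cons_eq_iff .
  then show ?case
    using Cons.IH by (simp add: pq qs)
qed

lemma idx_of_pairs_exists:
  "ks \<noteq> [] \<Longrightarrow> \<forall>k\<in>set ks. k \<ge> 1 \<Longrightarrow> last ks \<ge> 2 \<Longrightarrow> \<exists>ps. ps \<noteq> [] \<and> idx_of_pairs ps = ks"
proof (induction ks)
  case (Cons k ks)
  show ?case
  proof (cases "ks = []")
    case True
    then have "idx_of_pairs [(0, k - 2)] = k # ks"
      using Cons.prems by (simp add: idx_of_pairs_def)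
    then show ?thesis
      by blast
  next
    case False
    then obtain ps where "ps \<noteq> []" and ps: "idx_of_pairs ps = ks"
      using Cons by auto
    then obtain p q ps' where ps': "ps = (p, q) # ps'"
      by (metis list.exhaust prod.exhaust)
    show ?thesis
    proof (cases "k = 1")
      case True
      then have "idx_of_pairs ((Suc p, q) # ps') = k # ks"
        using ps ps' by (simp add: idx_of_pairs_Cons)
      then show ?thesis
        by blast
    next
      case False
      then have "k \<ge> 2"
        using Cons.prems by auto
      then have "idx_of_pairs ((0, k - 2) # ps) = k # ks"
        using ps by (simp add: idx_of_pairs_Cons)
      then show ?thesis
        by blast
    qed
  qed
qed simp

lemma admissible_iff_idx_of_pairs: "admissible ks \<longleftrightarrow> (\<exists>ps. ps \<noteq> [] \<and> idx_of_pairs ps = ks)"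
proof
  assume "admissible ks"
  then show "\<exists>ps. ps \<noteq> [] \<and> idx_of_pairs ps = ks"
    by (intro idx_of_pairs_exists) (auto simp: admissible_def)
next
  assume "\<exists>ps. ps \<noteq> [] \<and> idx_of_pairs ps = ks"
  then obtain ps p q where "ks = idx_of_pairs (ps @ [(p, q)])"
    by (metis rev_exhaust prod.exhaust)
  then show "admissible ks"
    by (auto simp: admissible_def idx_of_pairs_def)
qed

lemma admissible_snoc:
  assumes "admissible ks"
  obtains K c where "ks = K @ [Suc c]" and "\<forall>k\<in>set K. k \<ge> 1" and "c \<ge> 1"
proof
  show "ks = butlast ks @ [Suc (last ks - 1)]"
    using assms by (simp add: admissible_def)
  show "\<forall>k\<in>set (butlast ks). k \<ge> 1" and "last ks - 1 \<ge> 1"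
    using assms by (auto simp: admissible_def dest: in_set_butlastD)
qed

lemma dual_index_idx_of_pairs: "dual_index (idx_of_pairs ps) = idx_of_pairs (rev (map prod.swap ps))"
proof -
  have "(THE qs. idx_of_pairs qs = idx_of_pairs ps) = ps"
    by (rule the_equality) (simp_all add: idx_of_pairs_inj)
  then show ?thesis
    by (simp add: dual_index_def)
qed

section \<open>Weights and the connector\<close>

definition poch_over_fact :: "'a::real_normed_field \<Rightarrow> nat \<Rightarrow> 'a" where
  "poch_over_fact x m = pochhammer x m / fact m"

definition fact_over_poch :: "'a::real_normed_field \<Rightarrow> nat \<Rightarrow> 'a" where
  "fact_over_poch x m = fact m / pochhammer x (Suc m)"

definition connector :: "'a::real_normed_field \<Rightarrow> 'a \<Rightarrow> nat \<Rightarrow> nat \<Rightarrow> 'a" where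
  "connector x y m n = pochhammer (x + 1) n * pochhammer (y + 1) m / pochhammer (x + y + 1) (m + n)"

definition kappa :: "'a::Gamma \<Rightarrow> 'a \<Rightarrow> 'a" where
  "kappa x y = rGamma (x + 1) * rGamma (y + 1) / rGamma (x + y + 1)"

lemma connector_swap: "connector y x n m = connector x y m n"
  by (simp add: connector_def add.commute add.left_commute mult.commute)

lemma connector_Suc_right:
  "connector x y m (Suc n) = connector x y m n * (x + 1 + of_nat n) / (x + y + 1 + of_nat (m + n))"
  unfolding connector_def by (simp add: pochhammer_Suc field_simps del: of_nat_add)

lemma connector_Suc_left:
  "connector x y (Suc m) n = connector x y m n * (y + 1 + of_nat m) / (x + y + 1 + of_nat (m + n))"
  unfolding connector_def by (simp add: pochhammer_Suc field_simps del: of_nat_add)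

lemma poch_over_fact_0 [simp]: "poch_over_fact x 0 = 1"
  by (simp add: poch_over_fact_def)

lemma poch_over_fact_Suc: "poch_over_fact x (Suc n) = poch_over_fact x n * (x + of_nat n) / (of_nat n + 1)"
  unfolding poch_over_fact_def by (simp add: pochhammer_Suc field_simps)

lemma fact_over_poch_Suc:
  "fact_over_poch x (Suc k) = fact_over_poch x k * of_nat (Suc k) / (x + of_nat (Suc k))"
  unfolding fact_over_poch_def by (simp add: pochhammer_Suc[of x "Suc k"] field_simps del: of_nat_Suc)

lemma pochhammer_eq_shift:
  fixes z :: "'a::field"
  assumes "z + of_nat n \<noteq> 0"
  shows "pochhammer z n = z * pochhammer (z + 1) n / (z + of_nat n)"
  using assms pochhammer_rec[of z n] by (simp add: pochhammer_Suc field_simps)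

section \<open>Asymptotics of Pochhammer symbols\<close>

lemma Re_pos_add_of_nat_nonzero:
  fixes z :: complex
  assumes "Re z > 0"
  shows "z + of_nat n \<noteq> 0" and "of_nat n + z \<noteq> 0"
  using assms by (auto simp: complex_eq_iff)

lemma pochhammer_nonzero_Re_pos: "Re z > 0 \<Longrightarrow> pochhammer z n \<noteq> (0::complex)"
  by (auto simp: pochhammer_eq_0_iff)

lemma rGamma_nonzero_Re_pos: "Re z > 0 \<Longrightarrow> rGamma z \<noteq> (0::complex)"
  by (auto simp: rGamma_eq_zero_iff elim!: nonpos_Ints_cases)

lemma rGamma_series_nonzero_Re_pos: "Re z > 0 \<Longrightarrow> rGamma_series z N \<noteq> (0::complex)"
  by (simp add: rGamma_series_def pochhammer_nonzero_Re_pos)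

lemma pochhammer_eq_rGamma_series:
  fixes z :: complex
  assumes "z + of_nat N \<noteq> 0"
  shows "pochhammer z N = rGamma_series z N * fact N * exp (z * of_real (ln (real N))) / (z + of_nat N)"
  using assms by (simp add: rGamma_series_def pochhammer_Suc)

lemma exp_ln_tendsto_0: "Re w < 0 \<Longrightarrow> (\<lambda>N. exp (w * of_real (ln (real N)))) \<longlonglongrightarrow> (0::complex)"
proof -
  assume "Re w < 0"
  then have "(\<lambda>N. exp (Re w * ln (real N))) \<longlonglongrightarrow> 0"
    by real_asymp
  then show ?thesis
    by (subst tendsto_norm_zero_iff[symmetric]) (simp add: norm_exp_eq_Re)
qed

lemma add_of_nat_quotient_tendsto_1:
  assumes "Re z > 0"
  shows "(\<lambda>N. (w + of_nat N) / (z + of_nat N :: complex)) \<longlonglongrightarrow> 1"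
proof -
  have "(\<lambda>N. 1 + (w - z) / (z + of_nat N :: complex)) \<longlonglongrightarrow> 1 + 0"
    by (intro tendsto_add tendsto_const tendsto_divide_0[OF tendsto_const]
        tendsto_add_filterlim_at_infinity[OF tendsto_const tendsto_of_nat])
  moreover have "1 + (w - z) / (z + of_nat N) = (w + of_nat N) / (z + of_nat N)" for N
    using Re_pos_add_of_nat_nonzero[OF assms, of N] by (simp add: field_simps)
  ultimately show ?thesis by simp
qed

text \<open>Since \<open>(z)\<^sub>N \<sim> N! N\<^sup>z\<^sup>-\<^sup>1 / \<Gamma>(z)\<close>, a quotient of Pochhammer products is
  governed by the difference of the parameter sums.\<close>

lemma pochhammer_quotient_tendsto:
  fixes z\<^sub>1 z\<^sub>2 w\<^sub>1 w\<^sub>2 :: complex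
  assumes z: "Re z\<^sub>1 > 0" "Re z\<^sub>2 > 0" and w: "Re w\<^sub>1 > 0" "Re w\<^sub>2 > 0"
  shows "(\<lambda>N. pochhammer z\<^sub>1 N * pochhammer z\<^sub>2 N / (pochhammer w\<^sub>1 N * pochhammer w\<^sub>2 N)
            * exp ((w\<^sub>1 + w\<^sub>2 - z\<^sub>1 - z\<^sub>2) * of_real (ln (real N))))
         \<longlonglongrightarrow> rGamma z\<^sub>1 * rGamma z\<^sub>2 / (rGamma w\<^sub>1 * rGamma w\<^sub>2)"
proof -
  define E :: "complex \<Rightarrow> nat \<Rightarrow> complex" where "E u N = exp (u * of_real (ln (real N)))" for u N
  have E_diff: "E (w\<^sub>1 + w\<^sub>2 - z\<^sub>1 - z\<^sub>2) N = E w\<^sub>1 N * E w\<^sub>2 N / (E z\<^sub>1 N * E z\<^sub>2 N)" for N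
    by (simp add: E_def exp_add[symmetric] exp_diff[symmetric] algebra_simps)
  have eq: "pochhammer z\<^sub>1 N * pochhammer z\<^sub>2 N / (pochhammer w\<^sub>1 N * pochhammer w\<^sub>2 N) * E (w\<^sub>1 + w\<^sub>2 - z\<^sub>1 - z\<^sub>2) N
      = rGamma_series z\<^sub>1 N * rGamma_series z\<^sub>2 N / (rGamma_series w\<^sub>1 N * rGamma_series w\<^sub>2 N)
        * ((w\<^sub>1 + of_nat N) / (z\<^sub>1 + of_nat N)) * ((w\<^sub>2 + of_nat N) / (z\<^sub>2 + of_nat N))" for N
  proof -
    have alg: "(r\<^sub>1 * f * e\<^sub>1 / d\<^sub>1) * (r\<^sub>2 * f * e\<^sub>2 / d\<^sub>2) / ((s\<^sub>1 * f * g\<^sub>1 / c\<^sub>1) * (s\<^sub>2 * f * g\<^sub>2 / c\<^sub>2))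
        * (g\<^sub>1 * g\<^sub>2 / (e\<^sub>1 * e\<^sub>2)) = r\<^sub>1 * r\<^sub>2 / (s\<^sub>1 * s\<^sub>2) * (c\<^sub>1 / d\<^sub>1) * (c\<^sub>2 / d\<^sub>2)"
      if "f \<noteq> 0" "e\<^sub>1 \<noteq> 0" "e\<^sub>2 \<noteq> 0" "g\<^sub>1 \<noteq> 0" "g\<^sub>2 \<noteq> 0" "c\<^sub>1 \<noteq> 0" "c\<^sub>2 \<noteq> 0"
        "s\<^sub>1 \<noteq> 0" "s\<^sub>2 \<noteq> 0" "d\<^sub>1 \<noteq> 0" "d\<^sub>2 \<noteq> 0"
      for r\<^sub>1 r\<^sub>2 s\<^sub>1 s\<^sub>2 f e\<^sub>1 e\<^sub>2 g\<^sub>1 g\<^sub>2 c\<^sub>1 c\<^sub>2 d\<^sub>1 d\<^sub>2 :: complex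
      using that by (simp add: field_simps)
    note P = pochhammer_eq_rGamma_series[OF Re_pos_add_of_nat_nonzero(1)]
    show ?thesis
      unfolding E_diff P[OF z(1)] P[OF z(2)] P[OF w(1)] P[OF w(2)] E_def[symmetric]
      by (rule alg) (simp_all add: E_def rGamma_series_nonzero_Re_pos w Re_pos_add_of_nat_nonzero z)
  qed
  have "(\<lambda>N. rGamma_series z\<^sub>1 N * rGamma_series z\<^sub>2 N / (rGamma_series w\<^sub>1 N * rGamma_series w\<^sub>2 N)
        * ((w\<^sub>1 + of_nat N) / (z\<^sub>1 + of_nat N)) * ((w\<^sub>2 + of_nat N) / (z\<^sub>2 + of_nat N)))
      \<longlonglongrightarrow> rGamma z\<^sub>1 * rGamma z\<^sub>2 / (rGamma w\<^sub>1 * rGamma w\<^sub>2) * 1 * 1"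
    by (intro tendsto_intros add_of_nat_quotient_tendsto_1 z)
       (use rGamma_nonzero_Re_pos[OF w(1)] rGamma_nonzero_Re_pos[OF w(2)] in simp)
  then show ?thesis
    unfolding eq[symmetric] mult_1_right E_def .
qed

lemma pochhammer_quotient_tendsto_0:
  fixes z\<^sub>1 z\<^sub>2 w\<^sub>1 w\<^sub>2 :: complex
  assumes "Re z\<^sub>1 > 0" "Re z\<^sub>2 > 0" "Re w\<^sub>1 > 0" "Re w\<^sub>2 > 0" and "Re (z\<^sub>1 + z\<^sub>2) < Re (w\<^sub>1 + w\<^sub>2)"
  shows "(\<lambda>N. pochhammer z\<^sub>1 N * pochhammer z\<^sub>2 N / (pochhammer w\<^sub>1 N * pochhammer w\<^sub>2 N)) \<longlonglongrightarrow> 0"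
proof -
  define d where "d = w\<^sub>1 + w\<^sub>2 - z\<^sub>1 - z\<^sub>2"
  have "(\<lambda>N. pochhammer z\<^sub>1 N * pochhammer z\<^sub>2 N / (pochhammer w\<^sub>1 N * pochhammer w\<^sub>2 N)
            * exp (d * of_real (ln (real N))) * exp (- d * of_real (ln (real N))))
        \<longlonglongrightarrow> rGamma z\<^sub>1 * rGamma z\<^sub>2 / (rGamma w\<^sub>1 * rGamma w\<^sub>2) * 0"
    unfolding d_def
    by (intro tendsto_mult pochhammer_quotient_tendsto exp_ln_tendsto_0 assms) (use assms in simp)
  then show ?thesis
    by (simp add: exp_minus field_simps)
qed

lemma connector_tendsto_0:
  fixes a b :: complex
  assumes a: "Re a > 0" and b: "Re b > 0"
  shows "(\<lambda>N. connector a b m N) \<longlonglongrightarrow> 0"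
proof -
  have eq: "connector a b m N = pochhammer (b + 1) m / pochhammer (a + b + 1) m
      * (pochhammer (a + 1) N * pochhammer 1 N / (pochhammer (a + b + 1 + of_nat m) N * pochhammer 1 N))" for N
    unfolding connector_def pochhammer_product' by (simp add: pochhammer_fact[symmetric] field_simps)
  have "(\<lambda>N. pochhammer (a + 1) N * pochhammer 1 N / (pochhammer (a + b + 1 + of_nat m) N * pochhammer 1 N))
      \<longlonglongrightarrow> 0"
    by (rule pochhammer_quotient_tendsto_0) (use a b in auto)
  then show ?thesis
    unfolding eq by (rule tendsto_mult_right_zero)
qed

lemma kappa_partial_tendsto:
  fixes a b :: complex
  assumes a: "Re a > 0" and b: "Re b > 0"
  shows "(\<lambda>N. pochhammer (a + 1) N * pochhammer (b + 1) N / (fact N * pochhammer (a + b + 1) N))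
    \<longlonglongrightarrow> kappa a b"
  using pochhammer_quotient_tendsto[of "a + 1" "b + 1" 1 "a + b + 1"] a b
  by (simp add: pochhammer_fact kappa_def add_ac)

section \<open>Two summation formulas for the connector\<close>

lemma connector_telescope:
  fixes a b :: complex
  assumes a: "Re a > 0" and b: "Re b > 0"
  shows "connector a b m (Suc N) / (of_nat (Suc N) + a)
    = (connector a b m N - connector a b m (Suc N)) / (of_nat m + b)"
proof -
  have X: "a + 1 + of_nat N \<noteq> 0" and V: "of_nat m + b \<noteq> 0"
    using Re_pos_add_of_nat_nonzero[of "a + 1" N] Re_pos_add_of_nat_nonzero[OF b, of m] a by simp_all
  have D: "a + b + 1 + of_nat (m + N) = (a + 1 + of_nat N) + (of_nat m + b)"
    and S: "of_nat (Suc N) + a = a + 1 + of_nat N"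
    by simp_all
  have XV: "(a + 1 + of_nat N) + (of_nat m + b) \<noteq> 0"
    using Re_pos_add_of_nat_nonzero[of "a + b + 1" "m + N"] a b unfolding D by simp
  have "C * X / (X + V) / X = (C - C * X / (X + V)) / V"
    if "X \<noteq> 0" "V \<noteq> 0" "X + V \<noteq> 0" for C X V :: complex
  proof -
    have "C - C * X / (X + V) = C * V / (X + V)"
      using that(3) by (simp add: field_simps)
    then show ?thesis
      using that(1,2) by simp
  qed
  from this[OF X V XV] show ?thesis
    unfolding connector_Suc_right D S .
qed

lemma connector_tail_sums:
  fixes a b :: complex
  assumes a: "Re a > 0" and b: "Re b > 0"
  shows "(\<lambda>j. connector a b m (n + 1 + j) / (of_nat (n + 1 + j) + a))
    sums (connector a b m n / (of_nat m + b))"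
proof -
  define f where "f j = connector a b m (n + j) / (of_nat m + b)" for j
  have "f \<longlonglongrightarrow> 0"
    unfolding f_def using LIMSEQ_ignore_initial_segment[OF connector_tendsto_0[OF a b], of m n]
    by (intro tendsto_divide_zero) (simp add: add.commute)
  then have "(\<lambda>j. f j - f (Suc j)) sums (f 0 - 0)"
    by (intro telescope_sums') simp
  moreover have "f j - f (Suc j) = connector a b m (n + 1 + j) / (of_nat (n + 1 + j) + a)" for j
    using connector_telescope[OF a b, of m "n + j"] by (simp add: f_def diff_divide_distrib)
  ultimately show ?thesis
    by (simp add: f_def)
qed

text \<open>The remainder of the summation by parts that lowers the left argument \<open>k + 1\<close> of the connector
  in the weighted sum below.\<close>

definition connector_remainder :: "complex \<Rightarrow> complex \<Rightarrow> nat \<Rightarrow> nat \<Rightarrow> complex" where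
  "connector_remainder a b k n = of_nat n * (poch_over_fact b n * connector a b (Suc k) n)
     * (a + b + of_nat (Suc k) + of_nat n) / ((of_nat (Suc k) + b) * (a + of_nat n))"

lemma connector_remainder_tendsto_0:
  fixes a b :: complex
  assumes a: "Re a > 0" and b: "Re b > 0"
  shows "connector_remainder a b k \<longlonglongrightarrow> 0"
proof -
  define g where "g = a + b + of_nat (Suc k)"
  define K where "K = b * pochhammer (b + 1) (Suc k) / (pochhammer (a + b + 1) (Suc k) * (of_nat (Suc k) + b))"
  have eq: "connector_remainder a b k n
      = K * (pochhammer (b + 1) n * pochhammer (a + 1) n / (fact n * pochhammer (g + 1) n))
          * ((0 + of_nat n) / (b + of_nat n)) * ((g + of_nat n) / (a + of_nat n))" for n
  proof -
    have split: "pochhammer (a + b + 1) (Suc k + n) = pochhammer (a + b + 1) (Suc k) * pochhammer (g + 1) n"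
      unfolding pochhammer_product' g_def by (simp add: add_ac)
    have Y: "b + of_nat n \<noteq> 0"
      using Re_pos_add_of_nat_nonzero(1)[OF b] .
    have alg: "nn * ((b * P / Y) / F * (Q * T / (S * R))) * W / (V * X)
        = (b * T / (S * V)) * (P * Q / (F * R)) * ((0 + nn) / Y) * (W / X)"
      if "F \<noteq> 0" "R \<noteq> 0" "S \<noteq> 0" "V \<noteq> 0" "X \<noteq> 0" "Y \<noteq> 0"
      for nn P Y F Q T S R W V X :: complex
      using that by (simp add: field_simps)
    show ?thesis
      unfolding connector_remainder_def g_def[symmetric] poch_over_fact_def connector_def
        pochhammer_eq_shift[OF Y] split K_def
      by (rule alg)
        (use a b Y pochhammer_nonzero_Re_pos[of "a + b + 1"] pochhammer_nonzero_Re_pos[of "g + 1"]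
          Re_pos_add_of_nat_nonzero(2)[OF b, of "Suc k"] Re_pos_add_of_nat_nonzero(1)[OF a, of n]
          in \<open>simp_all add: g_def\<close>)
  qed
  have "(\<lambda>n. K * (pochhammer (b + 1) n * pochhammer (a + 1) n / (fact n * pochhammer (g + 1) n))
          * ((0 + of_nat n) / (b + of_nat n)) * ((g + of_nat n) / (a + of_nat n))) \<longlonglongrightarrow> K * 0 * 1 * 1"
    unfolding pochhammer_fact
    by (intro tendsto_mult tendsto_const pochhammer_quotient_tendsto_0 add_of_nat_quotient_tendsto_1)
       (use a b in \<open>simp_all add: g_def\<close>)
  then show ?thesis
    unfolding eq[abs_def] by simp
qed

lemma connector_remainder_Suc:
  fixes a b :: complex
  assumes a: "Re a > 0" and b: "Re b > 0"
  shows "connector_remainder a b k (Suc n)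
    = poch_over_fact b n * (b + of_nat n) * connector a b (Suc k) n / (of_nat (Suc k) + b)"
proof -
  define W where "W = a + b + 1 + of_nat (Suc k + n)"
  have X: "a + 1 + of_nat n \<noteq> 0" and W: "W \<noteq> 0" and V: "of_nat (Suc k) + b \<noteq> 0"
    using Re_pos_add_of_nat_nonzero(1)[of "a + 1" n] Re_pos_add_of_nat_nonzero(1)[of "a + b + 1" "Suc k + n"]
      Re_pos_add_of_nat_nonzero(2)[OF b, of "Suc k"] a b
    by (simp_all add: W_def)
  have "connector_remainder a b k (Suc n)
      = of_nat (Suc n) * (poch_over_fact b n * (b + of_nat n) / of_nat (Suc n)
          * (connector a b (Suc k) n * (a + 1 + of_nat n) / W)) * W / ((of_nat (Suc k) + b) * (a + 1 + of_nat n))"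
    unfolding connector_remainder_def poch_over_fact_Suc connector_Suc_right W_def by (simp add: add_ac)
  also have "\<dots> = poch_over_fact b n * (b + of_nat n) * connector a b (Suc k) n / (of_nat (Suc k) + b)"
  proof -
    have "s * (A * Y / s * (C * X / W)) * W / (V * X) = A * Y * C / V"
      if "s \<noteq> 0" "X \<noteq> 0" "W \<noteq> 0" "V \<noteq> 0" for s A Y C X W V :: complex
      using that by (simp add: field_simps)
    from this[OF of_nat_neq_0 X W V] show ?thesis .
  qed
  finally show ?thesis .
qed

lemma weighted_connector_partial_sums:
  fixes a b :: complex
  assumes a: "Re a > 0" and b: "Re b > 0"
  shows "(\<Sum>n<Suc N. poch_over_fact b n * connector a b 0 n / (of_nat n + a))
    = pochhammer (a + 1) N * pochhammer (b + 1) N / (fact N * pochhammer (a + b + 1) N) / a"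
proof (induction N)
  case 0
  then show ?case by (simp add: connector_def)
next
  case (Suc N)
  define P\<^sub>a where "P\<^sub>a = pochhammer (a + 1) N"
  define P\<^sub>b where "P\<^sub>b = pochhammer (b + 1) N"
  define P\<^sub>a\<^sub>b where "P\<^sub>a\<^sub>b = pochhammer (a + b + 1) N"
  define F where "F = (fact N :: complex)"
  define n where "n = (of_nat (Suc N) :: complex)"
  have new_term: "poch_over_fact b (Suc N) * connector a b 0 (Suc N) / (of_nat (Suc N) + a)
      = (b * P\<^sub>b / (n * F)) * (P\<^sub>a * (a + 1 + of_nat N) / (P\<^sub>a\<^sub>b * (a + b + 1 + of_nat N))) / (a + 1 + of_nat N)"
    unfolding poch_over_fact_def connector_def pochhammer_rec[of b N] fact_Suc add_0
    unfolding pochhammer_Suc P\<^sub>a_def P\<^sub>b_def P\<^sub>a\<^sub>b_def F_def n_def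
    by (simp add: add_ac)
  have alg: "P\<^sub>a * X * (P\<^sub>b * Y) / (n * F * (P\<^sub>a\<^sub>b * W)) / a
      = P\<^sub>a * P\<^sub>b / (F * P\<^sub>a\<^sub>b) / a + (b * P\<^sub>b / (n * F)) * (P\<^sub>a * X / (P\<^sub>a\<^sub>b * W)) / X"
    if "n \<noteq> 0" "F \<noteq> 0" "P\<^sub>a\<^sub>b \<noteq> 0" "W \<noteq> 0" "X \<noteq> 0" "a \<noteq> 0" "X = a + n" "Y = b + n" "W = a + b + n"
    for X Y W :: complex
    using that(1-6) by (simp add: field_simps) (simp add: that(7-9) algebra_simps)
  have "n \<noteq> 0"
    unfolding n_def by (rule of_nat_neq_0)
  moreover have "P\<^sub>a\<^sub>b \<noteq> 0" "a + b + 1 + of_nat N \<noteq> 0" "a + 1 + of_nat N \<noteq> 0"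
    using a b pochhammer_nonzero_Re_pos[of "a + b + 1" N] Re_pos_add_of_nat_nonzero(1)[of "a + b + 1" N]
      Re_pos_add_of_nat_nonzero(1)[of "a + 1" N]
    by (simp_all add: P\<^sub>a\<^sub>b_def)
  ultimately have "P\<^sub>a * (a + 1 + of_nat N) * (P\<^sub>b * (b + 1 + of_nat N)) / (n * F * (P\<^sub>a\<^sub>b * (a + b + 1 + of_nat N))) / a
      = P\<^sub>a * P\<^sub>b / (F * P\<^sub>a\<^sub>b) / a + poch_over_fact b (Suc N) * connector a b 0 (Suc N) / (of_nat (Suc N) + a)"
    unfolding new_term using a by (intro alg) (auto simp: n_def F_def)
  then show ?case
    using Suc.IH by (simp add: pochhammer_Suc P\<^sub>a_def P\<^sub>b_def P\<^sub>a\<^sub>b_def F_def n_def mult_ac)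
qed

lemma weighted_connector_recurrence:
  fixes a b :: complex
  assumes a: "Re a > 0" and b: "Re b > 0"
  shows "of_nat (Suc k) * (poch_over_fact b n * connector a b k n / (of_nat n + a))
      - (a + of_nat (Suc k)) * (poch_over_fact b n * connector a b (Suc k) n / (of_nat n + a))
    = connector_remainder a b k n - connector_remainder a b k (Suc n)"
proof -
  define A where "A = poch_over_fact b n"
  define C where "C = connector a b (Suc k) n"
  define m where "m = (of_nat (Suc k) :: complex)"
  define x where "x = (of_nat n :: complex)"
  define V where "V = m + b"
  define W where "W = a + b + m + x"
  have V: "V \<noteq> 0" and X: "a + x \<noteq> 0" and W: "W \<noteq> 0"
    using Re_pos_add_of_nat_nonzero(2)[OF b, of "Suc k"] Re_pos_add_of_nat_nonzero(1)[OF a, of n]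
      Re_pos_add_of_nat_nonzero(1)[of "a + b" "Suc k + n"] a b
    by (simp_all add: V_def W_def m_def x_def add_ac)
  have "C = connector a b k n * V / W"
    unfolding C_def connector_Suc_left V_def W_def m_def x_def by (simp add: add_ac)
  then have C_k: "connector a b k n = C * W / V"
    using V W by (simp add: field_simps)
  have alg: "m * (A * (C * W / V) / X) - (a + m) * (A * C / X) = x * (A * C) * W / (V * X) - A * (b + x) * C / V"
    if "V = m + b" "W = a + b + m + x" "X = a + x" "V \<noteq> 0" "X \<noteq> 0" for V W X
    using that(4,5) by (simp add: field_simps) (simp add: that(1-3) algebra_simps)
  show ?thesis
    unfolding connector_remainder_Suc[OF a b] add.commute[of "of_nat n" a] C_k
    unfolding connector_remainder_def A_def[symmetric] C_def[symmetric] m_def[symmetric] x_def[symmetric]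
      V_def[symmetric] W_def[symmetric]
    by (rule alg[OF V_def W_def refl V X])
qed

lemma weighted_connector_sums:
  fixes a b :: complex
  assumes a: "Re a > 0" and b: "Re b > 0"
  shows "(\<lambda>n. poch_over_fact b n * connector a b m n / (of_nat n + a)) sums (kappa a b * fact_over_poch a m)"
proof (induction m)
  case 0
  have "(\<lambda>N. \<Sum>n<Suc N. poch_over_fact b n * connector a b 0 n / (of_nat n + a)) \<longlonglongrightarrow> kappa a b / a"
    unfolding weighted_connector_partial_sums[OF a b]
    by (intro tendsto_divide kappa_partial_tendsto a b tendsto_const) (use a in auto)
  then have "(\<lambda>N. \<Sum>n<N. poch_over_fact b n * connector a b 0 n / (of_nat n + a)) \<longlonglongrightarrow> kappa a b / a"
    by (rule filterlim_sequentially_Suc[THEN iffD1])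
  then show ?case
    by (simp add: sums_def fact_over_poch_def)
next
  case (Suc k)
  define t where "t m n = poch_over_fact b n * connector a b m n / (of_nat n + a)" for m n
  define u where "u = connector_remainder a b k"
  have "(\<lambda>n. u n - u (Suc n)) sums (u 0 - 0)"
    unfolding u_def by (rule telescope_sums'[OF connector_remainder_tendsto_0[OF a b]])
  then have "(\<lambda>n. (of_nat (Suc k) * t k n - (u n - u (Suc n))) / (a + of_nat (Suc k)))
      sums ((of_nat (Suc k) * (kappa a b * fact_over_poch a k) - 0) / (a + of_nat (Suc k)))"
    by (intro sums_divide sums_diff sums_mult) (use Suc.IH in \<open>simp_all add: t_def u_def connector_remainder_def\<close>)
  moreover have "(of_nat (Suc k) * t k n - (u n - u (Suc n))) / (a + of_nat (Suc k)) = t (Suc k) n" for n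
  proof -
    have "(m * R - D) / (a + m) = S" if "m * R - (a + m) * S = D" "a + m \<noteq> 0" for m R S D :: complex
      using that by (simp add: field_simps)
    then show ?thesis
      using weighted_connector_recurrence[OF a b, of k n] Re_pos_add_of_nat_nonzero(1)[OF a, of "Suc k"]
      unfolding t_def u_def by blast
  qed
  ultimately show ?case
    by (simp add: t_def fact_over_poch_Suc mult_ac)
qed

section \<open>Real majorants\<close>

lemma norm_pochhammer_ge:
  fixes z :: complex
  assumes "Re z > 0"
  shows "pochhammer (Re z) n \<le> norm (pochhammer z n)"
proof (induction n)
  case (Suc n)
  have "Re z + of_nat n \<le> norm (z + of_nat n)"
    using complex_Re_le_cmod[of "z + of_nat n"] by simp
  with Suc.IH assms show ?case
    by (simp add: pochhammer_Suc norm_mult mult_mono pochhammer_nonneg)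
qed simp

definition pochhammer_bound :: "complex \<Rightarrow> real" where
  "pochhammer_bound z = exp ((Im z)\<^sup>2 * (Re z + 1) / (2 * Re z) / Re z)"

text \<open>The factors \<open>|z + k| / (Re z + k) \<le> 1 + (Im z)\<^sup>2 / (2 (Re z + k)\<^sup>2)\<close> are bounded by the
  terms of a telescoping product, so their product stays bounded.\<close>

lemma norm_add_of_nat_le:
  fixes z :: complex
  assumes z: "Re z > 0"
  defines "M \<equiv> (Im z)\<^sup>2 * (Re z + 1) / (2 * Re z)"
  shows "norm (z + of_nat n) \<le> (Re z + of_nat n) * exp (M / (Re z + of_nat n) - M / (Re z + of_nat (Suc n)))"
proof -
  define u where "u = Re z + of_nat n"
  define y where "y = Im z"
  have u: "u > 0" "u \<ge> Re z"
    using z by (auto simp: u_def)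
  have "norm (z + of_nat n) = sqrt (u\<^sup>2 + y\<^sup>2)"
    by (simp add: cmod_def u_def y_def)
  also have "\<dots> \<le> sqrt ((u + y\<^sup>2 / (2 * u))\<^sup>2)"
    using u zero_le_square[of "y * y"] by (intro real_sqrt_le_mono) (simp add: power2_eq_square field_simps)
  also have "\<dots> = u + y\<^sup>2 / (2 * u)"
    using u by simp
  also have "\<dots> = u * (1 + y\<^sup>2 / (2 * u\<^sup>2))"
    using u by (simp add: field_simps power2_eq_square)
  also have "\<dots> \<le> u * exp (y\<^sup>2 / (2 * u\<^sup>2))"
    using u by (intro mult_left_mono exp_ge_add_one_self[THEN order.trans[rotated]]) simp_all
  also have "\<dots> \<le> u * exp (M / u - M / (u + 1))"
  proof -
    have "1 / u = (Re z + 1) / (u * (Re z + 1))"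
      using u z by simp
    also have "\<dots> \<le> (Re z + 1) / (Re z * (u + 1))"
    proof (rule divide_left_mono)
      show "Re z * (u + 1) \<le> u * (Re z + 1)"
        using u by (simp add: algebra_simps)
    qed (use u z in auto)
    finally have "y\<^sup>2 / (2 * u) * (1 / u) \<le> y\<^sup>2 / (2 * u) * ((Re z + 1) / (Re z * (u + 1)))"
      using u by (intro mult_left_mono) auto
    then have "y\<^sup>2 / (2 * u\<^sup>2) \<le> M / (u * (u + 1))"
      unfolding M_def y_def using u z by (simp add: field_simps power2_eq_square)
    also have "\<dots> = M / u - M / (u + 1)"
      using u by (simp add: field_simps)
    finally show ?thesis
      using u by simp
  qed
  finally show ?thesis
    by (simp add: u_def add_ac)
qed

lemma norm_pochhammer_le:
  fixes z :: complex
  assumes z: "Re z > 0"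
  shows "norm (pochhammer z n) \<le> pochhammer_bound z * pochhammer (Re z) n"
proof -
  define M where "M = (Im z)\<^sup>2 * (Re z + 1) / (2 * Re z)"
  have "norm (pochhammer z n) \<le> exp (M / Re z - M / (Re z + of_nat n)) * pochhammer (Re z) n"
  proof (induction n)
    case (Suc n)
    have "norm (pochhammer z (Suc n)) = norm (pochhammer z n) * norm (z + of_nat n)"
      by (simp add: pochhammer_Suc norm_mult)
    also have "\<dots> \<le> (exp (M / Re z - M / (Re z + of_nat n)) * pochhammer (Re z) n)
        * ((Re z + of_nat n) * exp (M / (Re z + of_nat n) - M / (Re z + of_nat (Suc n))))"
      by (intro mult_mono Suc.IH norm_add_of_nat_le[OF z, folded M_def]) (use z in \<open>auto simp: pochhammer_nonneg\<close>)
    also have "\<dots> = exp (M / Re z - M / (Re z + of_nat (Suc n))) * pochhammer (Re z) (Suc n)"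
      by (simp add: pochhammer_Suc exp_add[symmetric] algebra_simps)
    finally show ?case .
  qed simp
  also have "\<dots> \<le> pochhammer_bound z * pochhammer (Re z) n"
  proof (rule mult_right_mono)
    have "M / (Re z + of_nat n) \<ge> 0"
      using z by (simp add: M_def)
    then show "exp (M / Re z - M / (Re z + of_nat n)) \<le> pochhammer_bound z"
      unfolding pochhammer_bound_def M_def by simp
  qed (use z in \<open>simp add: pochhammer_nonneg\<close>)
  finally show ?thesis .
qed

lemma pochhammer_bound_pos: "pochhammer_bound z > 0"
  by (simp add: pochhammer_bound_def)

lemma poch_over_fact_nonneg: "a > 0 \<Longrightarrow> poch_over_fact (a::real) m \<ge> 0"
  by (simp add: poch_over_fact_def pochhammer_nonneg)

lemma fact_over_poch_pos: "a > 0 \<Longrightarrow> fact_over_poch (a::real) m > 0"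
  by (simp add: fact_over_poch_def pochhammer_pos)

lemma connector_nonneg: "a > 0 \<Longrightarrow> b > 0 \<Longrightarrow> connector (a::real) b m n \<ge> 0"
  by (simp add: connector_def pochhammer_nonneg)

lemma kappa_pos: "a > 0 \<Longrightarrow> b > 0 \<Longrightarrow> kappa (a::real) b > 0"
  by (simp add: kappa_def rGamma_inverse_Gamma)

lemma kappa_nonzero: "Re a > 0 \<Longrightarrow> Re b > 0 \<Longrightarrow> kappa a b \<noteq> (0::complex)"
  using rGamma_nonzero_Re_pos[of "a + 1"] rGamma_nonzero_Re_pos[of "b + 1"] rGamma_nonzero_Re_pos[of "a + b + 1"]
  by (simp add: kappa_def)

lemma kappa_swap: "kappa y x = kappa x y"
  by (simp add: kappa_def add.commute mult.commute)

lemma norm_poch_over_fact_le: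
  "Re z > 0 \<Longrightarrow> norm (poch_over_fact z m) \<le> pochhammer_bound z * poch_over_fact (Re z) m"
  unfolding poch_over_fact_def using norm_pochhammer_le[of z m]
  by (simp add: norm_divide divide_right_mono)

lemma norm_fact_over_poch_le:
  assumes "Re z > 0"
  shows "norm (fact_over_poch z m) \<le> fact_over_poch (Re z) m"
proof -
  have "norm (fact_over_poch z m) = fact m / norm (pochhammer z (Suc m))"
    unfolding fact_over_poch_def norm_divide by simp
  also have "\<dots> \<le> fact m / pochhammer (Re z) (Suc m)"
    using norm_pochhammer_ge[OF assms, of "Suc m"] pochhammer_pos[of "Re z" "Suc m"] assms
    by (intro divide_left_mono) (auto intro!: mult_pos_pos)
  finally show ?thesis
    by (simp add: fact_over_poch_def)
qed

lemma norm_connector_le: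
  assumes x: "Re x > 0" and y: "Re y > 0"
  shows "norm (connector x y m n) \<le> pochhammer_bound (x + 1) * pochhammer_bound (y + 1) * connector (Re x) (Re y) m n"
proof -
  have "norm (connector x y m n)
      = norm (pochhammer (x + 1) n) * norm (pochhammer (y + 1) m) / norm (pochhammer (x + y + 1) (m + n))"
    by (simp add: connector_def norm_mult norm_divide)
  also have "\<dots> \<le> (pochhammer_bound (x + 1) * pochhammer (Re x + 1) n) * (pochhammer_bound (y + 1) * pochhammer (Re y + 1) m)
      / pochhammer (Re x + Re y + 1) (m + n)"
    using norm_pochhammer_le[of "x + 1" n] norm_pochhammer_le[of "y + 1" m] norm_pochhammer_ge[of "x + y + 1" "m + n"] x y
    by (intro frac_le mult_mono)
       (auto intro!: mult_nonneg_nonneg pochhammer_nonneg pochhammer_pos less_imp_le[OF pochhammer_bound_pos])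
  also have "\<dots> = pochhammer_bound (x + 1) * pochhammer_bound (y + 1) * connector (Re x) (Re y) m n"
    by (simp add: connector_def)
  finally show ?thesis .
qed

lemma norm_inverse_power_le:
  assumes "Re b > 0"
  shows "norm (1 / (of_nat m + b) ^ c) \<le> 1 / (of_nat m + Re b) ^ c"
proof -
  have "(of_nat m + Re b) ^ c \<le> norm (of_nat m + b) ^ c"
    using assms complex_Re_le_cmod[of "of_nat m + b"] by (intro power_mono) auto
  moreover have "0 < (of_nat m + Re b) ^ c"
    using assms by simp
  ultimately show ?thesis
    by (simp add: norm_divide norm_power divide_left_mono)
qed

lemma norm_divide_add_of_nat_le:
  fixes a x :: complex
  assumes "Re a > 0"
  shows "norm (x / (of_nat N + a)) \<le> norm x / (of_nat N + Re a)"
  using assms complex_Re_le_cmod[of "of_nat N + a"]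
  unfolding norm_divide by (intro divide_left_mono) (auto intro!: mult_pos_pos)

lemma of_real_poch_over_fact: "of_real (poch_over_fact a m) = poch_over_fact (of_real a :: complex) m"
  by (simp add: poch_over_fact_def pochhammer_of_real)

lemma of_real_fact_over_poch: "of_real (fact_over_poch a m) = fact_over_poch (of_real a :: complex) m"
  by (simp add: fact_over_poch_def pochhammer_of_real)

lemma of_real_connector: "of_real (connector a b m n) = connector (of_real a :: complex) (of_real b) m n"
  by (simp add: connector_def pochhammer_of_real[symmetric])

lemma of_real_kappa: "of_real (kappa a b) = kappa (of_real a :: complex) (of_real b)"
  by (simp add: kappa_def rGamma_complex_of_real[symmetric])

lemma sums_imp_has_sum_dominated:
  fixes f :: "nat \<Rightarrow> 'a::banach" and g :: "nat \<Rightarrow> real"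
  assumes "f sums s" and "summable g" and "\<And>n. norm (f n) \<le> C * g n"
  shows "(f has_sum s) UNIV"
proof (rule norm_summable_imp_has_sum[OF _ assms(1)])
  have "summable (\<lambda>n. C * g n)"
    by (intro summable_mult assms(2))
  then show "summable (\<lambda>n. norm (f n))"
    by (rule summable_comparison_test') (use assms(3) in simp)
qed

text \<open>Each summation formula is needed twice: for the complex parameters, and for their real parts,
  where it provides the majorants.\<close>

lemma connector_tail_has_sum:
  fixes a b :: complex
  assumes a: "Re a > 0" and b: "Re b > 0"
  shows "((\<lambda>j. connector a b m (n + 1 + j) / (of_nat (n + 1 + j) + a))
           has_sum (connector a b m n / (of_nat m + b))) UNIV"
    and "((\<lambda>j. connector (Re a) (Re b) m (n + 1 + j) / (of_nat (n + 1 + j) + Re a))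
           has_sum (connector (Re a) (Re b) m n / (of_nat m + Re b))) UNIV"
proof -
  have "(\<lambda>j. of_real (connector (Re a) (Re b) m (n + 1 + j) / (of_nat (n + 1 + j) + Re a)))
      sums (of_real (connector (Re a) (Re b) m n / (of_nat m + Re b)) :: complex)"
    using connector_tail_sums[of "of_real (Re a)" "of_real (Re b)" m n] a b by (simp add: of_real_connector)
  then have real: "(\<lambda>j. connector (Re a) (Re b) m (n + 1 + j) / (of_nat (n + 1 + j) + Re a))
      sums (connector (Re a) (Re b) m n / (of_nat m + Re b))"
    by (simp only: sums_of_real_iff)
  then show "((\<lambda>j. connector (Re a) (Re b) m (n + 1 + j) / (of_nat (n + 1 + j) + Re a))
           has_sum (connector (Re a) (Re b) m n / (of_nat m + Re b))) UNIV"
    by (rule sums_nonneg_imp_has_sum) (use a b in \<open>simp add: connector_nonneg\<close>)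
  show "((\<lambda>j. connector a b m (n + 1 + j) / (of_nat (n + 1 + j) + a))
           has_sum (connector a b m n / (of_nat m + b))) UNIV"
  proof (rule sums_imp_has_sum_dominated[OF connector_tail_sums[OF a b] sums_summable[OF real]])
    fix j
    show "norm (connector a b m (n + 1 + j) / (of_nat (n + 1 + j) + a))
        \<le> pochhammer_bound (a + 1) * pochhammer_bound (b + 1)
          * (connector (Re a) (Re b) m (n + 1 + j) / (of_nat (n + 1 + j) + Re a))"
      using order_trans[OF norm_divide_add_of_nat_le[OF a]
          divide_right_mono[OF norm_connector_le[OF a b, of m "n + 1 + j"], of "of_nat (n + 1 + j) + Re a"]] a
      by simp
  qed
qed

lemma weighted_connector_has_sum:
  fixes a b :: complex
  assumes a: "Re a > 0" and b: "Re b > 0"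
  shows "((\<lambda>n. poch_over_fact b n * connector a b m n / (of_nat n + a))
           has_sum (kappa a b * fact_over_poch a m)) UNIV"
    and "((\<lambda>n. poch_over_fact (Re b) n * connector (Re a) (Re b) m n / (of_nat n + Re a))
           has_sum (kappa (Re a) (Re b) * fact_over_poch (Re a) m)) UNIV"
proof -
  have "(\<lambda>n. of_real (poch_over_fact (Re b) n * connector (Re a) (Re b) m n / (of_nat n + Re a)))
      sums (of_real (kappa (Re a) (Re b) * fact_over_poch (Re a) m) :: complex)"
    using weighted_connector_sums[of "of_real (Re a)" "of_real (Re b)" m] a b
    by (simp add: of_real_connector of_real_poch_over_fact of_real_fact_over_poch of_real_kappa)
  then have real: "(\<lambda>n. poch_over_fact (Re b) n * connector (Re a) (Re b) m n / (of_nat n + Re a))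
      sums (kappa (Re a) (Re b) * fact_over_poch (Re a) m)"
    by (simp only: sums_of_real_iff)
  then show "((\<lambda>n. poch_over_fact (Re b) n * connector (Re a) (Re b) m n / (of_nat n + Re a))
           has_sum (kappa (Re a) (Re b) * fact_over_poch (Re a) m)) UNIV"
    by (rule sums_nonneg_imp_has_sum) (use a b in \<open>simp add: connector_nonneg poch_over_fact_nonneg\<close>)
  show "((\<lambda>n. poch_over_fact b n * connector a b m n / (of_nat n + a))
           has_sum (kappa a b * fact_over_poch a m)) UNIV"
  proof (rule sums_imp_has_sum_dominated[OF weighted_connector_sums[OF a b] sums_summable[OF real]])
    fix n
    have "norm (poch_over_fact b n * connector a b m n / (of_nat n + a))
        \<le> norm (poch_over_fact b n) * norm (connector a b m n) / (of_nat n + Re a)"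
      using norm_divide_add_of_nat_le[OF a, of "poch_over_fact b n * connector a b m n" n] by (simp add: norm_mult)
    also have "\<dots> \<le> (pochhammer_bound b * poch_over_fact (Re b) n)
        * (pochhammer_bound (a + 1) * pochhammer_bound (b + 1) * connector (Re a) (Re b) m n) / (of_nat n + Re a)"
      by (intro divide_right_mono mult_mono norm_connector_le norm_poch_over_fact_le a b)
        (use a b in \<open>auto intro!: mult_nonneg_nonneg poch_over_fact_nonneg less_imp_le[OF pochhammer_bound_pos]\<close>)
    finally show "norm (poch_over_fact b n * connector a b m n / (of_nat n + a))
        \<le> pochhammer_bound b * (pochhammer_bound (a + 1) * pochhammer_bound (b + 1))
          * (poch_over_fact (Re b) n * connector (Re a) (Re b) m n / (of_nat n + Re a))"
      by (simp add: mult_ac)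
  qed
qed

section \<open>Connected sums\<close>

lemma summable_on_Sigma_nonneg_iff:
  fixes h :: "'a \<times> 'b \<Rightarrow> real"
  assumes inner: "\<And>x. x \<in> A \<Longrightarrow> ((\<lambda>y. h (x, y)) has_sum s x) (B x)"
    and nonneg: "\<And>x y. x \<in> A \<Longrightarrow> y \<in> B x \<Longrightarrow> h (x, y) \<ge> 0"
  shows "h summable_on Sigma A B \<longleftrightarrow> s summable_on A"
proof
  assume "h summable_on Sigma A B"
  then have "(\<lambda>x. infsum (\<lambda>y. h (x, y)) (B x)) summable_on A"
    by (rule summable_on_SigmaD) (rule has_sum_imp_summable[OF inner])
  also have "?this \<longleftrightarrow> s summable_on A"
    by (intro summable_on_cong) (rule infsumI[OF inner])
  finally show "s summable_on A" .
qed (rule summable_on_SigmaI[OF inner _ nonneg])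

lemma infsum_Sigma_dominated:
  fixes h :: "'a \<times> 'b \<Rightarrow> 'c::banach" and H :: "'a \<times> 'b \<Rightarrow> real"
  assumes "H summable_on Sigma A B"
    and "\<And>p. p \<in> Sigma A B \<Longrightarrow> norm (h p) \<le> C * H p"
    and inner: "\<And>x. x \<in> A \<Longrightarrow> ((\<lambda>y. h (x, y)) has_sum s x) (B x)"
  shows "infsum h (Sigma A B) = infsum s A"
proof -
  have "(\<lambda>p. norm (h p)) summable_on Sigma A B"
    by (rule summable_on_comparison_test[OF summable_on_cmult_right[OF assms(1)]]) (use assms(2) in auto)
  then have "h summable_on Sigma A B"
    by (rule abs_summable_summable)
  then have "infsum h (Sigma A B) = infsum (\<lambda>x. infsum (\<lambda>y. h (x, y)) (B x)) A"
    by (rule infsum_Sigma_banach[symmetric])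
  also have "\<dots> = infsum s A"
    by (intro infsum_cong) (rule infsumI[OF inner])
  finally show ?thesis .
qed

text \<open>The exponent list is stored backwards: its head is the exponent attached to the largest
  variable \<open>m\<close>, so that the recursion peels off the outermost summation.\<close>

fun nested_sum :: "'a::real_normed_field \<Rightarrow> 'a \<Rightarrow> nat list \<Rightarrow> nat \<Rightarrow> 'a" where
  "nested_sum x y [] m = 0"
| "nested_sum x y [c] m = poch_over_fact x m / (of_nat m + y) ^ c"
| "nested_sum x y (c # d # ds) m = (\<Sum>i<m. nested_sum x y (d # ds) i) / (of_nat m + y) ^ c"

lemma nested_sum_Suc_head: "nested_sum x y (Suc c # ds) m = nested_sum x y (c # ds) m / (of_nat m + y)"
  by (cases ds) (simp_all add: divide_divide_eq_left mult.commute)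

lemma nested_sum_nonneg: "a > 0 \<Longrightarrow> b > 0 \<Longrightarrow> nested_sum (a::real) b ks m \<ge> 0"
  by (induction a b ks m rule: nested_sum.induct) (auto simp: poch_over_fact_nonneg intro!: sum_nonneg divide_nonneg_nonneg)

lemma norm_nested_sum_le:
  assumes a: "Re a > 0" and b: "Re b > 0"
  shows "norm (nested_sum a b ks m) \<le> pochhammer_bound a * nested_sum (Re a) (Re b) ks m"
proof (induction ks arbitrary: m rule: induct_list012)
  case (2 c)
  have "norm (nested_sum a b [c] m) = norm (poch_over_fact a m) * norm (1 / (of_nat m + b) ^ c)"
    by (simp add: norm_mult norm_divide)
  also have "\<dots> \<le> (pochhammer_bound a * poch_over_fact (Re a) m) * (1 / (of_nat m + Re b) ^ c)"
    by (intro mult_mono norm_poch_over_fact_le norm_inverse_power_le a b)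
       (use a in \<open>auto intro!: mult_nonneg_nonneg poch_over_fact_nonneg less_imp_le[OF pochhammer_bound_pos]\<close>)
  finally show ?case
    by simp
next
  case (3 c d ds)
  have "norm (nested_sum a b (c # d # ds) m) = norm (\<Sum>i<m. nested_sum a b (d # ds) i) * norm (1 / (of_nat m + b) ^ c)"
    by (simp add: norm_mult norm_divide)
  also have "\<dots> \<le> (\<Sum>i<m. pochhammer_bound a * nested_sum (Re a) (Re b) (d # ds) i) * (1 / (of_nat m + Re b) ^ c)"
    by (intro mult_mono norm_inverse_power_le b order.trans[OF norm_sum sum_mono] "3.IH")
       (use a b in \<open>auto intro!: sum_nonneg mult_nonneg_nonneg nested_sum_nonneg less_imp_le[OF pochhammer_bound_pos]\<close>)
  also have "\<dots> = pochhammer_bound a * nested_sum (Re a) (Re b) (c # d # ds) m"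
    by (simp add: sum_distrib_left)
  finally show ?case .
qed simp

definition connected_term :: "'a::Gamma \<Rightarrow> 'a \<Rightarrow> nat list \<Rightarrow> nat list \<Rightarrow> nat \<times> nat \<Rightarrow> 'a" where
  "connected_term x y k l p = nested_sum x y (rev k) (fst p) * connector x y (fst p) (snd p) * nested_sum y x (rev l) (snd p)"

text \<open>With an empty right index the connector is replaced by \<open>\<kappa>(x,y) m!/(x)\<^sub>m\<^sub>+\<^sub>1\<close>, and the last
  exponent of \<open>k\<close> is lowered by one, exactly as in the definition of \<open>Z\<close>.\<close>

definition boundary_term :: "'a::Gamma \<Rightarrow> 'a \<Rightarrow> nat list \<Rightarrow> nat \<Rightarrow> 'a" where
  "boundary_term x y k m = nested_sum x y (rev k) m * (of_nat m + y) * (kappa x y * fact_over_poch x m)"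

definition connected_sum :: "complex \<Rightarrow> complex \<Rightarrow> nat list \<Rightarrow> nat list \<Rightarrow> complex" where
  "connected_sum x y k l =
     (if l = [] then infsum (boundary_term x y k) UNIV
      else if k = [] then infsum (boundary_term y x l) UNIV
      else infsum (connected_term x y k l) UNIV)"

definition connected_summable :: "real \<Rightarrow> real \<Rightarrow> nat list \<Rightarrow> nat list \<Rightarrow> bool" where
  "connected_summable x y k l \<longleftrightarrow>
     (if l = [] then boundary_term x y k summable_on UNIV
      else if k = [] then boundary_term y x l summable_on UNIV
      else connected_term x y k l summable_on UNIV)"

text \<open>Convergence is tracked through the real parts of the parameters, whose connected sums are
  nonnegative majorants.\<close>

definition connected_equiv :: "complex \<Rightarrow> complex \<Rightarrow> nat list \<Rightarrow> nat list \<Rightarrow> nat list \<Rightarrow> nat list \<Rightarrow> bool" where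
  "connected_equiv a b k l k' l' \<longleftrightarrow>
     (connected_summable (Re a) (Re b) k l \<longleftrightarrow> connected_summable (Re a) (Re b) k' l')
     \<and> (connected_summable (Re a) (Re b) k l \<longrightarrow> connected_sum a b k l = connected_sum a b k' l')"

lemma boundary_term_Nil [simp]: "boundary_term x y [] = (\<lambda>_. 0)"
  by (simp add: boundary_term_def fun_eq_iff)

lemma connected_term_swap: "connected_term y x l k (prod.swap p) = connected_term x y k l p"
  by (simp add: connected_term_def connector_swap mult_ac)

lemma connected_sum_swap: "connected_sum y x l k = connected_sum x y k l"
proof -
  have "infsum (connected_term y x l k) UNIV = infsum (connected_term x y k l) UNIV"
    using infsum_reindex_bij_betw[OF bij_swap, of "connected_term y x l k"] by (simp add: connected_term_swap)
  then show ?thesis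
    by (auto simp: connected_sum_def)
qed

lemma connected_summable_swap: "connected_summable y x l k \<longleftrightarrow> connected_summable x y k l"
proof -
  have "connected_term y x l k summable_on UNIV \<longleftrightarrow> connected_term x y k l summable_on UNIV"
    using summable_on_reindex_bij_betw[OF bij_swap, of "connected_term y x l k"] by (simp add: connected_term_swap)
  then show ?thesis
    by (auto simp: connected_summable_def)
qed

lemma connected_equiv_refl: "connected_equiv a b k l k l"
  by (simp add: connected_equiv_def)

lemma connected_equiv_sym: "connected_equiv a b k l k' l' \<Longrightarrow> connected_equiv a b k' l' k l"
  by (auto simp: connected_equiv_def)

lemma connected_equiv_trans:
  "connected_equiv a b k l k' l' \<Longrightarrow> connected_equiv a b k' l' k'' l'' \<Longrightarrow> connected_equiv a b k l k'' l''"
  by (auto simp: connected_equiv_def)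

lemma connected_equiv_swap: "connected_equiv a b k l k' l' \<Longrightarrow> connected_equiv b a l k l' k'"
  by (simp add: connected_equiv_def connected_sum_swap connected_summable_swap)

lemma connected_term_nonneg: "a > 0 \<Longrightarrow> b > 0 \<Longrightarrow> connected_term (a::real) b k l p \<ge> 0"
  unfolding connected_term_def by (intro mult_nonneg_nonneg nested_sum_nonneg connector_nonneg)

lemma norm_connected_term_le:
  assumes a: "Re a > 0" and b: "Re b > 0"
  shows "norm (connected_term a b k l p)
    \<le> (pochhammer_bound a * pochhammer_bound b * (pochhammer_bound (a + 1) * pochhammer_bound (b + 1)))
       * connected_term (Re a) (Re b) k l p"
proof -
  have "norm (connected_term a b k l p) = norm (nested_sum a b (rev k) (fst p)) * norm (connector a b (fst p) (snd p))
      * norm (nested_sum b a (rev l) (snd p))"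
    by (simp add: connected_term_def norm_mult)
  also have "\<dots> \<le> (pochhammer_bound a * nested_sum (Re a) (Re b) (rev k) (fst p))
      * (pochhammer_bound (a + 1) * pochhammer_bound (b + 1) * connector (Re a) (Re b) (fst p) (snd p))
      * (pochhammer_bound b * nested_sum (Re b) (Re a) (rev l) (snd p))"
    by (intro mult_mono norm_nested_sum_le norm_connector_le a b)
       (use a b in \<open>auto intro!: mult_nonneg_nonneg nested_sum_nonneg connector_nonneg
                                   less_imp_le[OF pochhammer_bound_pos]\<close>)
  also have "\<dots> = (pochhammer_bound a * pochhammer_bound b * (pochhammer_bound (a + 1) * pochhammer_bound (b + 1)))
      * connected_term (Re a) (Re b) k l p"
    by (simp add: connected_term_def mult_ac)
  finally show ?thesis .
qed

lemma boundary_term_Suc: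
  "of_nat m + y \<noteq> 0 \<Longrightarrow>
    boundary_term x y (K @ [Suc c]) m = nested_sum x y (c # rev K) m * (kappa x y * fact_over_poch x m)"
  by (simp add: boundary_term_def nested_sum_Suc_head)

lemma boundary_term_nonneg: "a > 0 \<Longrightarrow> b > 0 \<Longrightarrow> boundary_term (a::real) b k m \<ge> 0"
  unfolding boundary_term_def
  by (intro mult_nonneg_nonneg nested_sum_nonneg less_imp_le[OF kappa_pos] less_imp_le[OF fact_over_poch_pos]) auto

lemma connected_equiv_transport_Nil:
  fixes a b :: complex
  assumes a: "Re a > 0" and b: "Re b > 0"
  shows "connected_equiv a b (K @ [Suc c]) [] (K @ [c]) [1]"
proof -
  have split: "connected_term x y (K @ [c]) [1] (m, n)
      = nested_sum x y (c # rev K) m * (poch_over_fact y n * connector x y m n / (of_nat n + x))" for x y m n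
    by (simp add: connected_term_def)
  have Re_b: "of_nat m + Re b \<noteq> 0" for m
    using b by (simp add: add_pos_nonneg)
  have inner': "((\<lambda>n. connected_term (Re a) (Re b) (K @ [c]) [1] (m, n))
      has_sum boundary_term (Re a) (Re b) (K @ [Suc c]) m) UNIV" for m
    unfolding split boundary_term_Suc[OF Re_b] by (intro has_sum_cmult_right weighted_connector_has_sum(2) a b)
  have inner: "((\<lambda>n. connected_term a b (K @ [c]) [1] (m, n)) has_sum boundary_term a b (K @ [Suc c]) m) UNIV" for m
    unfolding split boundary_term_Suc[OF Re_pos_add_of_nat_nonzero(2)[OF b]]
    by (intro has_sum_cmult_right weighted_connector_has_sum(1) a b)
  have "connected_term (Re a) (Re b) (K @ [c]) [1] summable_on Sigma UNIV (\<lambda>_. UNIV)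
      \<longleftrightarrow> boundary_term (Re a) (Re b) (K @ [Suc c]) summable_on UNIV"
    by (rule summable_on_Sigma_nonneg_iff[OF inner']) (use a b connected_term_nonneg in auto)
  moreover have "connected_term (Re a) (Re b) (K @ [c]) [1] summable_on Sigma UNIV (\<lambda>_. UNIV) \<Longrightarrow>
      infsum (connected_term a b (K @ [c]) [1]) (Sigma UNIV (\<lambda>_. UNIV)) = infsum (boundary_term a b (K @ [Suc c])) UNIV"
    by (rule infsum_Sigma_dominated[OF _ norm_connected_term_le[OF a b] inner])
  ultimately show ?thesis
    by (auto simp: connected_equiv_def connected_summable_def connected_sum_def)
qed

text \<open>Splitting the factor \<open>1/(m + y)\<close> off the last exponent of the left index by the tail formula,
  and reassembling the sum over \<open>n < N\<close> into the new last entry \<open>1\<close> of the right index,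
  both pass through this term, indexed by \<open>((m, N), n)\<close> with \<open>n < N\<close>.\<close>

definition connected_split_term :: "'a::Gamma \<Rightarrow> 'a \<Rightarrow> nat list \<Rightarrow> nat list \<Rightarrow> (nat \<times> nat) \<times> nat \<Rightarrow> 'a" where
  "connected_split_term x y k l q = nested_sum x y (rev k) (fst (fst q)) * nested_sum y x (rev l) (snd q)
     * (connector x y (fst (fst q)) (snd (fst q)) / (of_nat (snd (fst q)) + x))"

lemma connected_split_term_has_sum_lessThan:
  assumes "l \<noteq> []"
  shows "((\<lambda>n. connected_split_term x y k l ((m, N), n)) has_sum connected_term x y k (l @ [1]) (m, N)) {..<N}"
proof -
  have "(\<Sum>n<N. connected_split_term x y k l ((m, N), n)) = connected_term x y k (l @ [1]) (m, N)"
    using assms by (cases "rev l")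
      (simp_all add: connected_split_term_def connected_term_def sum_distrib_left sum_distrib_right sum_divide_distrib mult_ac)
  then show ?thesis
    by (auto intro: has_sum_finiteI)
qed

lemma connected_split_term_tail_has_sum:
  fixes a b :: complex
  assumes a: "Re a > 0" and b: "Re b > 0"
  shows "((\<lambda>j. connected_split_term a b (K @ [c]) l ((m, n + 1 + j), n)) has_sum connected_term a b (K @ [Suc c]) l (m, n)) UNIV"
    and "((\<lambda>j. connected_split_term (Re a) (Re b) (K @ [c]) l ((m, n + 1 + j), n))
           has_sum connected_term (Re a) (Re b) (K @ [Suc c]) l (m, n)) UNIV"
proof -
  have eq: "connected_term x y (K @ [Suc c]) l (m, n)
      = nested_sum x y (rev (K @ [c])) m * nested_sum y x (rev l) n * (connector x y m n / (of_nat m + y))" for x y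
    by (simp add: connected_term_def nested_sum_Suc_head)
  show "((\<lambda>j. connected_split_term a b (K @ [c]) l ((m, n + 1 + j), n)) has_sum connected_term a b (K @ [Suc c]) l (m, n)) UNIV"
    unfolding eq connected_split_term_def fst_conv snd_conv
    by (intro has_sum_cmult_right connector_tail_has_sum(1) a b)
  show "((\<lambda>j. connected_split_term (Re a) (Re b) (K @ [c]) l ((m, n + 1 + j), n))
           has_sum connected_term (Re a) (Re b) (K @ [Suc c]) l (m, n)) UNIV"
    unfolding eq connected_split_term_def fst_conv snd_conv
    by (intro has_sum_cmult_right connector_tail_has_sum(2) a b)
qed

lemma connected_split_term_nonneg: "a > 0 \<Longrightarrow> b > 0 \<Longrightarrow> connected_split_term (a::real) b k l q \<ge> 0"
  unfolding connected_split_term_def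
  by (intro mult_nonneg_nonneg divide_nonneg_nonneg nested_sum_nonneg connector_nonneg) auto

lemma norm_connected_split_term_le:
  assumes a: "Re a > 0" and b: "Re b > 0"
  shows "norm (connected_split_term a b k l q)
    \<le> (pochhammer_bound a * pochhammer_bound b * (pochhammer_bound (a + 1) * pochhammer_bound (b + 1)))
       * connected_split_term (Re a) (Re b) k l q"
proof -
  obtain m N n where q: "q = ((m, N), n)"
    by (metis prod.exhaust)
  have "norm (connector a b m N / (of_nat N + a))
      \<le> (pochhammer_bound (a + 1) * pochhammer_bound (b + 1)) * connector (Re a) (Re b) m N / (of_nat N + Re a)"
    using order_trans[OF norm_divide_add_of_nat_le[OF a]
        divide_right_mono[OF norm_connector_le[OF a b, of m N], of "of_nat N + Re a"]] a
    by simp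
  then have "norm (connected_split_term a b k l q)
      \<le> (pochhammer_bound a * nested_sum (Re a) (Re b) (rev k) m) * (pochhammer_bound b * nested_sum (Re b) (Re a) (rev l) n)
        * ((pochhammer_bound (a + 1) * pochhammer_bound (b + 1)) * connector (Re a) (Re b) m N / (of_nat N + Re a))"
    unfolding q connected_split_term_def fst_conv snd_conv norm_mult
    by (intro mult_mono norm_nested_sum_le a b)
       (use a b in \<open>auto intro!: mult_nonneg_nonneg divide_nonneg_nonneg nested_sum_nonneg connector_nonneg
                                   less_imp_le[OF pochhammer_bound_pos]\<close>)
  then show ?thesis
    by (simp add: q connected_split_term_def mult_ac)
qed

lemma connected_equiv_transport_Cons:
  fixes a b :: complex
  assumes a: "Re a > 0" and b: "Re b > 0" and l: "l \<noteq> []"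
  shows "connected_equiv a b (K @ [Suc c]) l (K @ [c]) (l @ [1])"
proof -
  define \<rho> :: "(nat \<times> nat) \<times> nat \<Rightarrow> (nat \<times> nat) \<times> nat" where "\<rho> = (\<lambda>((m, n), j). ((m, n + 1 + j), n))"
  define S :: "((nat \<times> nat) \<times> nat) set" where "S = Sigma UNIV (\<lambda>p. {..<snd p})"
  define F where "F = connected_split_term a b (K @ [c]) l"
  define F' where "F' = connected_split_term (Re a) (Re b) (K @ [c]) l"
  define C where "C = pochhammer_bound a * pochhammer_bound b * (pochhammer_bound (a + 1) * pochhammer_bound (b + 1))"
  have bij: "bij_betw \<rho> UNIV S"
    by (rule bij_betwI[where g = "\<lambda>((m, N), n). ((m, n), N - n - 1)"]) (auto simp: \<rho>_def S_def)
  have dom: "norm (F q) \<le> C * F' q" for q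
    unfolding F_def F'_def C_def by (rule norm_connected_split_term_le[OF a b])
  have tail: "((\<lambda>j. (F \<circ> \<rho>) (p, j)) has_sum connected_term a b (K @ [Suc c]) l p) UNIV"
    and tail': "((\<lambda>j. (F' \<circ> \<rho>) (p, j)) has_sum connected_term (Re a) (Re b) (K @ [Suc c]) l p) UNIV" for p
    using connected_split_term_tail_has_sum[OF a b, of K c l "fst p" "snd p"]
    by (simp_all add: F_def F'_def \<rho>_def case_prod_beta)
  have finite: "((\<lambda>n. F (p, n)) has_sum connected_term a b (K @ [c]) (l @ [1]) p) {..<snd p}"
    and finite': "((\<lambda>n. F' (p, n)) has_sum connected_term (Re a) (Re b) (K @ [c]) (l @ [1]) p) {..<snd p}" for p
    using connected_split_term_has_sum_lessThan[OF l, of _ _ "K @ [c]" "fst p" "snd p"] by (simp_all add: F_def F'_def)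
  have F'_nonneg: "F' q \<ge> 0" for q
    using a b by (simp add: F'_def connected_split_term_nonneg)
  have iff1: "(F' \<circ> \<rho>) summable_on Sigma UNIV (\<lambda>_. UNIV)
      \<longleftrightarrow> connected_term (Re a) (Re b) (K @ [Suc c]) l summable_on UNIV"
    by (rule summable_on_Sigma_nonneg_iff[OF tail']) (simp add: F'_nonneg)
  have iff2: "(F' \<circ> \<rho>) summable_on Sigma UNIV (\<lambda>_. UNIV) \<longleftrightarrow> F' summable_on S"
    using summable_on_reindex_bij_betw[OF bij, of F'] by (simp add: o_def)
  have iff3: "F' summable_on S \<longleftrightarrow> connected_term (Re a) (Re b) (K @ [c]) (l @ [1]) summable_on UNIV"
    unfolding S_def by (rule summable_on_Sigma_nonneg_iff[OF finite']) (simp add: F'_nonneg)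
  have "infsum (connected_term a b (K @ [Suc c]) l) UNIV = infsum (connected_term a b (K @ [c]) (l @ [1])) UNIV"
    if "connected_term (Re a) (Re b) (K @ [Suc c]) l summable_on UNIV"
  proof -
    have "infsum (connected_term a b (K @ [Suc c]) l) UNIV = infsum (F \<circ> \<rho>) (Sigma UNIV (\<lambda>_. UNIV))"
      using infsum_Sigma_dominated[of "F' \<circ> \<rho>" UNIV "\<lambda>_. UNIV" "F \<circ> \<rho>" C, OF _ _ tail] that iff1 dom
      by simp
    also have "\<dots> = infsum F S"
      using infsum_reindex_bij_betw[OF bij, of F] by (simp add: o_def)
    also have "\<dots> = infsum (connected_term a b (K @ [c]) (l @ [1])) UNIV"
      using infsum_Sigma_dominated[of F' UNIV "\<lambda>p. {..<snd p}" F C, OF _ _ finite] that iff1 iff2 dom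
      by (simp add: S_def)
    finally show ?thesis .
  qed
  with iff1 iff2 iff3 l show ?thesis
    by (auto simp: connected_equiv_def connected_summable_def connected_sum_def)
qed

lemma connected_equiv_transport:
  fixes a b :: complex
  assumes "Re a > 0" and "Re b > 0"
  shows "connected_equiv a b (K @ [Suc c]) l (K @ [c]) (l @ [1])"
  using connected_equiv_transport_Nil[OF assms] connected_equiv_transport_Cons[OF assms] by (cases "l = []") auto

lemma connected_equiv_transport':
  fixes a b :: complex
  assumes "Re a > 0" and "Re b > 0"
  shows "connected_equiv a b (K @ [1]) (L @ [d]) K (L @ [Suc d])"
  using connected_equiv_swap[OF connected_equiv_transport[OF assms(2,1), of L d K]] by (rule connected_equiv_sym)

lemma connected_equiv_last_to_ones:
  fixes a b :: complex
  assumes "Re a > 0" and "Re b > 0"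
  shows "connected_equiv a b (K @ [c + j]) l (K @ [c]) (l @ replicate j 1)"
proof (induction j arbitrary: l)
  case 0
  show ?case by (simp add: connected_equiv_refl)
next
  case (Suc j)
  show ?case
    using connected_equiv_trans[OF connected_equiv_transport[OF assms, of K "c + j" l] Suc.IH[of "l @ [1]"]] by simp
qed

lemma connected_equiv_ones_to_last:
  fixes a b :: complex
  assumes "Re a > 0" and "Re b > 0"
  shows "connected_equiv a b (K @ replicate i 1) (L @ [d]) K (L @ [d + i])"
proof (induction i arbitrary: d)
  case 0
  show ?case by (simp add: connected_equiv_refl)
next
  case (Suc i)
  have "K @ replicate (Suc i) 1 = (K @ replicate i 1) @ [1]"
    by (simp add: replicate_append_same[symmetric])
  then show ?case
    using connected_equiv_trans[OF connected_equiv_transport'[OF assms, of "K @ replicate i 1" L d] Suc.IH[of "Suc d"]] by simp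
qed

lemma connected_equiv_block:
  fixes a b :: complex
  assumes "Re a > 0" and "Re b > 0"
  shows "connected_equiv a b (K @ idx_of_pairs [(p, q)]) l K (l @ idx_of_pairs [(q, p)])"
proof -
  have "connected_equiv a b ((K @ replicate p 1) @ [1 + Suc q]) l ((K @ replicate p 1) @ [1]) (l @ replicate (Suc q) 1)"
    by (rule connected_equiv_last_to_ones[OF assms])
  moreover have "(K @ replicate p 1) @ [1] = K @ replicate (Suc p) 1"
    and "l @ replicate (Suc q) 1 = (l @ replicate q 1) @ [1]"
    by (simp_all add: replicate_append_same[symmetric])
  moreover have "connected_equiv a b (K @ replicate (Suc p) 1) ((l @ replicate q 1) @ [1]) K ((l @ replicate q 1) @ [1 + Suc p])"
    by (rule connected_equiv_ones_to_last[OF assms])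
  ultimately show ?thesis
    unfolding idx_of_pairs_single by (auto intro: connected_equiv_trans)
qed

lemma connected_equiv_idx_of_pairs:
  fixes a b :: complex
  assumes "Re a > 0" and "Re b > 0"
  shows "connected_equiv a b (K @ idx_of_pairs ps) l K (l @ idx_of_pairs (rev (map prod.swap ps)))"
proof (induction ps arbitrary: l rule: rev_induct)
  case Nil
  show ?case by (simp add: idx_of_pairs_def connected_equiv_refl)
next
  case (snoc pq ps)
  obtain p q where pq: "pq = (p, q)"
    by fastforce
  have "K @ idx_of_pairs (ps @ [pq]) = (K @ idx_of_pairs ps) @ idx_of_pairs [(p, q)]"
    and "l @ idx_of_pairs (rev (map prod.swap (ps @ [pq])))
      = (l @ idx_of_pairs [(q, p)]) @ idx_of_pairs (rev (map prod.swap ps))"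
    by (simp_all add: pq idx_of_pairs_append[symmetric])
  then show ?case
    using connected_equiv_trans[OF connected_equiv_block[OF assms] snoc.IH] by simp
qed

section \<open>The multiple series as a boundary connected sum\<close>

definition incr_tuples_ending :: "nat \<Rightarrow> nat \<Rightarrow> nat list set" where
  "incr_tuples_ending n m = {ms \<in> incr_tuples n. last ms = m}"

definition tuple_term :: "'a::real_normed_field \<Rightarrow> 'a \<Rightarrow> nat list \<Rightarrow> nat list \<Rightarrow> 'a" where
  "tuple_term x y ks ms = poch_over_fact x (hd ms) * (\<Prod>i<length ks. 1 / (of_nat (ms ! i) + y) ^ (ks ! i))"

lemma sorted_wrt_less_le_last:
  assumes "sorted_wrt (<) xs" and "x \<in> set xs"
  shows "x \<le> (last xs :: nat)"
proof -
  have xs: "xs = butlast xs @ [last xs]"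
    using assms(2) by (metis append_butlast_last_id empty_iff list.set(1))
  then have "\<forall>y\<in>set (butlast xs). y < last xs"
    using assms(1) sorted_wrt_append[of "(<)" "butlast xs" "[last xs]"] by simp
  moreover have "x \<in> set (butlast xs) \<or> x = last xs"
    using assms(2) by (subst (asm) xs) auto
  ultimately show ?thesis
    by auto
qed

lemma incr_tuples_ending_Suc:
  assumes "n \<ge> 1"
  shows "incr_tuples_ending (Suc n) m = (\<lambda>ms. ms @ [m]) ` (\<Union>m'\<in>{..<m}. incr_tuples_ending n m')"
proof (intro equalityI subsetI)
  fix ms
  assume "ms \<in> incr_tuples_ending (Suc n) m"
  then have len: "length ms = Suc n" and sorted: "sorted_wrt (<) ms" and last: "last ms = m"
    by (auto simp: incr_tuples_ending_def incr_tuples_def)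
  define ms' where "ms' = butlast ms"
  have ms: "ms = ms' @ [m]"
    using len last by (auto simp: ms'_def intro: append_butlast_last_id[symmetric])
  then have "sorted_wrt (<) ms'" and less: "\<forall>x\<in>set ms'. x < m" and len': "length ms' = n"
    using sorted len by (auto simp: sorted_wrt_append)
  moreover have "last ms' < m"
  proof -
    have "ms' \<noteq> []"
      using len' assms by auto
    then show ?thesis
      using less last_in_set by blast
  qed
  ultimately have "ms' \<in> (\<Union>m'\<in>{..<m}. incr_tuples_ending n m')"
    by (auto simp: incr_tuples_ending_def incr_tuples_def)
  then show "ms \<in> (\<lambda>ms. ms @ [m]) ` (\<Union>m'\<in>{..<m}. incr_tuples_ending n m')"
    using ms by blast
next
  fix ms
  assume "ms \<in> (\<lambda>ms. ms @ [m]) ` (\<Union>m'\<in>{..<m}. incr_tuples_ending n m')"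
  then obtain ms' m' where ms: "ms = ms' @ [m]" and "m' < m" and "ms' \<in> incr_tuples_ending n m'"
    by auto
  then have "length ms' = n" and "sorted_wrt (<) ms'" and "\<forall>x\<in>set ms'. x < m"
    using sorted_wrt_less_le_last by (fastforce simp: incr_tuples_ending_def incr_tuples_def)+
  then show "ms \<in> incr_tuples_ending (Suc n) m"
    using ms by (auto simp: incr_tuples_ending_def incr_tuples_def sorted_wrt_append)
qed

lemma finite_incr_tuples_ending: "finite (incr_tuples_ending n m)"
proof (rule finite_subset)
  show "incr_tuples_ending n m \<subseteq> {ms. set ms \<subseteq> {..m} \<and> length ms = n}"
    using sorted_wrt_less_le_last by (fastforce simp: incr_tuples_ending_def incr_tuples_def)
qed (rule finite_lists_length_eq, simp)

lemma incr_tuples_ending_1: "incr_tuples_ending (Suc 0) m = {[m]}"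
  by (auto simp: incr_tuples_ending_def incr_tuples_def length_Suc_conv)

lemma nested_sum_eq_sum_tuple_term:
  "ks \<noteq> [] \<Longrightarrow> nested_sum x y (rev ks) m = (\<Sum>ms\<in>incr_tuples_ending (length ks) m. tuple_term x y ks ms)"
proof (induction ks arbitrary: m rule: rev_induct)
  case (snoc k ks)
  show ?case
  proof (cases "ks = []")
    case True
    then show ?thesis
      by (simp add: incr_tuples_ending_1 tuple_term_def)
  next
    case False
    define n where "n = length ks"
    have n: "n \<ge> 1"
      using False by (simp add: n_def Suc_le_eq)
    have tuple_term_snoc: "tuple_term x y (ks @ [k]) (ms @ [m]) = tuple_term x y ks ms * (1 / (of_nat m + y) ^ k)"
      if "ms \<in> incr_tuples_ending n m'" for ms m'
      using that n by (auto simp: tuple_term_def incr_tuples_ending_def incr_tuples_def n_def nth_append hd_append)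
    have "(\<Sum>ms\<in>incr_tuples_ending (length (ks @ [k])) m. tuple_term x y (ks @ [k]) ms)
        = (\<Sum>ms\<in>(\<Union>m'\<in>{..<m}. incr_tuples_ending n m'). tuple_term x y (ks @ [k]) (ms @ [m]))"
      unfolding n_def[symmetric] length_append_singleton incr_tuples_ending_Suc[OF n]
      by (subst sum.reindex) (auto simp: inj_on_def)
    also have "\<dots> = (\<Sum>m'<m. \<Sum>ms\<in>incr_tuples_ending n m'. tuple_term x y ks ms * (1 / (of_nat m + y) ^ k))"
      by (subst sum.UNION_disjoint)
         (auto simp: finite_incr_tuples_ending tuple_term_snoc intro!: sum.cong, auto simp: incr_tuples_ending_def)
    also have "\<dots> = (\<Sum>m'<m. nested_sum x y (rev ks) m') * (1 / (of_nat m + y) ^ k)"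
      by (simp add: sum_divide_distrib n_def snoc.IH[OF False])
    also have "\<dots> = nested_sum x y (rev (ks @ [k])) m"
      using False by (cases "rev ks") auto
    finally show ?thesis ..
  qed
qed simp

lemma Z_term_snoc:
  assumes "length ms = Suc (length K)"
  shows "Z_term (K @ [Suc c]) a b ms = tuple_term a b (K @ [c]) ms * fact_over_poch a (last ms)"
proof -
  have "last ms = ms ! length K"
    using assms last_conv_nth[of ms] by (cases ms) auto
  moreover have "(\<Prod>i<length K. 1 / (of_nat (ms ! i) + b) ^ ((K @ [Suc c]) ! i))
      = (\<Prod>i<length K. 1 / (of_nat (ms ! i) + b) ^ ((K @ [c]) ! i))"
    by (intro prod.cong) (simp_all add: nth_append)
  ultimately show ?thesis
    by (simp add: Z_term_def tuple_term_def poch_over_fact_def fact_over_poch_def prod.lessThan_Suc mult_ac)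
qed

lemma tuple_term_nonneg: "a > 0 \<Longrightarrow> b > 0 \<Longrightarrow> tuple_term (a::real) b ks ms \<ge> 0"
  unfolding tuple_term_def by (intro mult_nonneg_nonneg prod_nonneg poch_over_fact_nonneg) auto

lemma norm_tuple_term_le:
  assumes a: "Re a > 0" and b: "Re b > 0"
  shows "norm (tuple_term a b ks ms) \<le> pochhammer_bound a * tuple_term (Re a) (Re b) ks ms"
proof -
  have "norm (\<Prod>i<length ks. 1 / (of_nat (ms ! i) + b) ^ (ks ! i))
      \<le> (\<Prod>i<length ks. 1 / (of_nat (ms ! i) + Re b) ^ (ks ! i))"
    unfolding prod_norm[symmetric] by (intro prod_mono conjI norm_inverse_power_le b norm_ge_zero)
  then show ?thesis
    unfolding tuple_term_def norm_mult using a
    by (intro order.trans[OF mult_mono[OF norm_poch_over_fact_le]])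
       (auto simp: mult.assoc intro!: mult_nonneg_nonneg poch_over_fact_nonneg less_imp_le[OF pochhammer_bound_pos])
qed

lemma tuple_term_has_sum_ending:
  "((\<lambda>ms. tuple_term x y (K @ [c]) ms * fact_over_poch x m)
     has_sum (nested_sum x y (c # rev K) m * fact_over_poch x m)) (incr_tuples_ending (Suc (length K)) m)"
  using nested_sum_eq_sum_tuple_term[of "K @ [c]" x y m]
  by (intro has_sum_finiteI finite_incr_tuples_ending) (simp add: sum_distrib_right)

lemma Z_snoc_eq_infsum_Sigma:
  "Z (K @ [Suc c]) a b = infsum (\<lambda>p. tuple_term a b (K @ [c]) (snd p) * fact_over_poch a (fst p))
     (Sigma UNIV (incr_tuples_ending (Suc (length K))))"
proof -
  have "bij_betw (\<lambda>ms. (last ms, ms)) (incr_tuples (Suc (length K))) (Sigma UNIV (incr_tuples_ending (Suc (length K))))"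
    by (rule bij_betwI[where g = snd]) (auto simp: incr_tuples_ending_def)
  then show ?thesis
    unfolding Z_def
    by (subst infsum_reindex_bij_betw[symmetric]) (auto simp: incr_tuples_def Z_term_snoc intro: infsum_cong)
qed

lemma connected_sum_eq_kappa_Z:
  fixes a b :: complex
  assumes a: "Re a > 0" and b: "Re b > 0" and summable: "connected_summable (Re a) (Re b) (K @ [Suc c]) []"
  shows "connected_sum a b (K @ [Suc c]) [] = kappa a b * Z (K @ [Suc c]) a b"
proof -
  define n where "n = Suc (length K)"
  define S where "S = Sigma UNIV (incr_tuples_ending n)"
  define f where "f p = tuple_term a b (K @ [c]) (snd p) * fact_over_poch a (fst p)" for p
  define f' where "f' p = tuple_term (Re a) (Re b) (K @ [c]) (snd p) * fact_over_poch (Re a) (fst p)" for p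
  define g where "g m = nested_sum a b (c # rev K) m * fact_over_poch a m" for m
  define g' where "g' m = nested_sum (Re a) (Re b) (c # rev K) m * fact_over_poch (Re a) m" for m
  have boundary: "boundary_term a b (K @ [Suc c]) = (\<lambda>m. kappa a b * g m)"
    and boundary': "boundary_term (Re a) (Re b) (K @ [Suc c]) = (\<lambda>m. kappa (Re a) (Re b) * g' m)"
    using Re_pos_add_of_nat_nonzero(2)[OF b] b
    by (auto simp: g_def g'_def boundary_term_Suc mult_ac add_pos_nonneg intro!: ext)
  have "g' summable_on UNIV"
    using summable_on_cmult_right[of "boundary_term (Re a) (Re b) (K @ [Suc c])" UNIV "1 / kappa (Re a) (Re b)"]
      summable kappa_pos[of "Re a" "Re b"] a b
    by (simp add: connected_summable_def boundary')
  moreover have "f' summable_on S \<longleftrightarrow> g' summable_on UNIV"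
    unfolding S_def f'_def g'_def n_def
    by (rule summable_on_Sigma_nonneg_iff)
       (use a b in \<open>simp_all add: tuple_term_has_sum_ending tuple_term_nonneg less_imp_le[OF fact_over_poch_pos]\<close>)
  moreover have "norm (f p) \<le> pochhammer_bound a * f' p" for p
  proof -
    have "norm (f p) \<le> (pochhammer_bound a * tuple_term (Re a) (Re b) (K @ [c]) (snd p)) * fact_over_poch (Re a) (fst p)"
      unfolding f_def norm_mult
      by (intro mult_mono norm_tuple_term_le norm_fact_over_poch_le a b)
         (use a b in \<open>auto intro!: mult_nonneg_nonneg tuple_term_nonneg less_imp_le[OF pochhammer_bound_pos]\<close>)
    then show ?thesis
      by (simp add: f'_def mult.assoc)
  qed
  ultimately have "infsum f S = infsum g UNIV"
    unfolding S_def
    by (intro infsum_Sigma_dominated[where H = f' and C = "pochhammer_bound a"])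
       (simp_all add: f_def g_def n_def tuple_term_has_sum_ending)
  moreover have "Z (K @ [Suc c]) a b = infsum f S"
    unfolding Z_snoc_eq_infsum_Sigma S_def f_def n_def ..
  ultimately show ?thesis
    by (simp add: connected_sum_def boundary infsum_cmult_right')
qed

section \<open>Convergence for admissible indices\<close>

lemma inverse_power_le_mono:
  fixes b :: real
  assumes b: "b > 0" and "d \<le> k"
  shows "1 / (of_nat m + b) ^ k \<le> max 1 (1 / b) ^ k * (1 / (of_nat m + b) ^ d)"
proof -
  have le: "1 / (of_nat m + b) \<le> max 1 (1 / b)"
    using b by (intro order.trans[OF divide_left_mono max.cobounded2]) auto
  have "1 / (of_nat m + b) ^ k = (1 / (of_nat m + b) ^ d) * (1 / (of_nat m + b)) ^ (k - d)"
    using assms(2) by (simp add: power_one_over power_add[symmetric])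
  also have "\<dots> \<le> (1 / (of_nat m + b) ^ d) * max 1 (1 / b) ^ (k - d)"
    using b le by (intro mult_left_mono power_mono) auto
  also have "\<dots> \<le> (1 / (of_nat m + b) ^ d) * max 1 (1 / b) ^ k"
    using b by (intro mult_left_mono power_increasing) auto
  finally show ?thesis
    by (simp add: mult.commute)
qed

lemma nested_sum_le:
  fixes a b :: real
  assumes a: "a > 0" and b: "b > 0"
  shows "list_all2 (\<lambda>k d. d \<le> k) ks ds \<Longrightarrow> nested_sum a b ks m \<le> max 1 (1 / b) ^ sum_list ks * nested_sum a b ds m"
proof (induction ks arbitrary: ds m rule: induct_list012)
  case (2 k)
  then obtain d where ds: "ds = [d]" "d \<le> k"
    by (auto simp: list_all2_Cons1)
  have "poch_over_fact a m * (1 / (of_nat m + b) ^ k) \<le> poch_over_fact a m * (max 1 (1 / b) ^ k * (1 / (of_nat m + b) ^ d))"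
    by (intro mult_left_mono inverse_power_le_mono b ds(2) poch_over_fact_nonneg a)
  then show ?case
    using ds by (simp add: mult_ac)
next
  case (3 k k' ks)
  then obtain d d' ds' where ds: "ds = d # d' # ds'" "d \<le> k" "list_all2 (\<lambda>k d. d \<le> k) (k' # ks) (d' # ds')"
    by (auto simp: list_all2_Cons1)
  define R where "R = max 1 (1 / b)"
  have "(\<Sum>i<m. nested_sum a b (k' # ks) i) * (1 / (of_nat m + b) ^ k)
      \<le> (R ^ sum_list (k' # ks) * (\<Sum>i<m. nested_sum a b (d' # ds') i)) * (R ^ k * (1 / (of_nat m + b) ^ d))"
    unfolding R_def sum_distrib_left
    by (intro mult_mono sum_mono "3.IH"(2)[OF ds(3)] inverse_power_le_mono[OF b ds(2)])
       (use a b in \<open>auto intro!: sum_nonneg nested_sum_nonneg mult_nonneg_nonneg\<close>)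
  then show ?case
    using ds(1) by (simp add: R_def power_add mult_ac)
qed simp

lemma connected_summable_Nil_mono:
  fixes a b :: real
  assumes a: "a > 0" and b: "b > 0"
    and le: "list_all2 (\<lambda>k d. d \<le> k) (c # rev K) (d # rev D)"
    and summable: "connected_summable a b (D @ [Suc d]) []"
  shows "connected_summable a b (K @ [Suc c]) []"
proof -
  define R where "R = max 1 (1 / b) ^ sum_list (c # rev K)"
  have bound: "boundary_term a b (K @ [Suc c]) m \<le> R * boundary_term a b (D @ [Suc d]) m" for m
  proof -
    have "nested_sum a b (c # rev K) m * (kappa a b * fact_over_poch a m)
        \<le> (R * nested_sum a b (d # rev D) m) * (kappa a b * fact_over_poch a m)"
      unfolding R_def using a b
      by (intro mult_right_mono nested_sum_le le mult_nonneg_nonneg less_imp_le[OF kappa_pos] less_imp_le[OF fact_over_poch_pos])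
    then show ?thesis
      using b by (simp add: boundary_term_Suc add_pos_nonneg mult.assoc)
  qed
  have "(\<lambda>m. R * boundary_term a b (D @ [Suc d]) m) summable_on UNIV"
    using summable by (intro summable_on_cmult_right) (simp add: connected_summable_def)
  then have "boundary_term a b (K @ [Suc c]) summable_on UNIV"
    by (rule summable_on_comparison_test) (use bound a b boundary_term_nonneg in auto)
  then show ?thesis
    by (simp add: connected_summable_def)
qed

lemma connected_summable_two:
  fixes a b :: real
  assumes a: "a > 0" and b: "b > 0"
  shows "connected_summable a b [2] []"
proof -
  have eq: "boundary_term a b [2] m = kappa a b * (1 / ((of_nat m + a) * (of_nat m + b)))" for m
  proof -
    have "(p / f) * (f / (p * q)) = 1 / q" if "p \<noteq> 0" "f \<noteq> 0" "q \<noteq> 0" for p f q :: real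
      using that by simp
    then have "poch_over_fact a m * fact_over_poch a m = 1 / (a + of_nat m)"
      unfolding poch_over_fact_def fact_over_poch_def pochhammer_Suc
      using a pochhammer_pos[OF a, of m] by (simp add: add_pos_nonneg)
    moreover have "A / Y\<^sup>2 * Y * (k * B) = k * (A * B) / Y" if "Y \<noteq> 0" for A B Y k :: real
      using that by (simp add: power2_eq_square)
    moreover have "of_nat m + b \<noteq> 0"
      using b by (simp add: add_pos_nonneg)
    ultimately show ?thesis
      by (simp add: boundary_term_def add.commute)
  qed
  have "(\<lambda>m::nat. 1 / ((of_nat m + a) * (of_nat m + b))) \<in> O(\<lambda>m. inverse (of_nat m ^ 2))"
    using a b by real_asymp
  moreover have "summable (\<lambda>m. norm (inverse (of_nat m ^ 2) :: real))"
    using inverse_power_summable[of 2, where 'a=real] by simp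
  ultimately have "summable (\<lambda>m::nat. 1 / ((of_nat m + a) * (of_nat m + b)))"
    by (rule summable_comparison_test_bigo[rotated])
  then have "(\<lambda>m::nat. 1 / ((of_nat m + a) * (of_nat m + b))) summable_on UNIV"
    by (rule summable_nonneg_imp_summable_on) (use a b in simp)
  then have "(\<lambda>m::nat. kappa a b * (1 / ((of_nat m + a) * (of_nat m + b)))) summable_on UNIV"
    by (rule summable_on_cmult_right)
  moreover have "boundary_term a b [2] = (\<lambda>m. kappa a b * (1 / ((of_nat m + a) * (of_nat m + b))))"
    by (intro ext eq)
  ultimately show ?thesis
    by (simp add: connected_summable_def)
qed

lemma connected_summable_ones_two:
  fixes a b :: real
  assumes a: "a > 0" and b: "b > 0"
  shows "connected_summable a b (replicate p 1 @ [2]) []"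
proof -
  have "connected_summable b a ([] @ [Suc (Suc p)]) []"
    by (rule connected_summable_Nil_mono[of _ _ "Suc p" "[]" 1 "[]"])
       (use a b connected_summable_two[OF b a] in \<open>simp_all add: numeral_2_eq_2\<close>)
  moreover have "connected_equiv a b ([] @ idx_of_pairs [(p, 0)]) [] [] ([] @ idx_of_pairs [(0, p)])"
    by (rule connected_equiv_block) (use a b in simp_all)
  ultimately show ?thesis
    by (simp add: connected_equiv_def idx_of_pairs_single connected_summable_swap numeral_2_eq_2)
qed

lemma connected_summable_admissible:
  fixes a b :: real
  assumes a: "a > 0" and b: "b > 0" and "admissible ks"
  shows "connected_summable a b ks []"
proof -
  obtain K c where ks: "ks = K @ [Suc c]" and K: "\<forall>k\<in>set K. k \<ge> 1" and c: "c \<ge> 1"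
    using admissible_snoc[OF assms(3)] .
  have "list_all2 (\<lambda>k d. d \<le> k) xs (replicate (length xs) 1)" if "\<forall>k\<in>set xs. k \<ge> 1" for xs
    using that by (induction xs) auto
  from this[of "rev K"] have "list_all2 (\<lambda>k d. d \<le> k) (c # rev K) (1 # rev (replicate (length K) 1))"
    using K c by simp
  moreover have "connected_summable a b (replicate (length K) 1 @ [Suc 1]) []"
    using connected_summable_ones_two[OF a b, of "length K"] by (simp add: numeral_2_eq_2)
  ultimately show ?thesis
    unfolding ks by (rule connected_summable_Nil_mono[OF a b])
qed

lemma connected_sum_admissible:
  fixes a b :: complex
  assumes a: "Re a > 0" and b: "Re b > 0" and "admissible ks"
  shows "connected_sum a b ks [] = kappa a b * Z ks a b"
proof -
  obtain K c where ks: "ks = K @ [Suc c]"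
    using admissible_snoc[OF assms(3)] .
  have "connected_summable (Re a) (Re b) (K @ [Suc c]) []"
    unfolding ks[symmetric] by (rule connected_summable_admissible) (use a b assms(3) in auto)
  then show ?thesis
    unfolding ks by (rule connected_sum_eq_kappa_Z[OF a b])
qed

theorem lemma2p4:
  fixes ks :: "nat list" and \<alpha> \<beta> :: complex
  assumes "admissible ks" and "Re \<alpha> > 0" and "Re \<beta> > 0"
  shows "Z ks \<alpha> \<beta> = Z (dual_index ks) \<beta> \<alpha>"
proof -
  obtain ps where ps: "ps \<noteq> []" "idx_of_pairs ps = ks"
    using assms(1) admissible_iff_idx_of_pairs by blast
  define ks' where "ks' = dual_index ks"
  have ks': "ks' = idx_of_pairs (rev (map prod.swap ps))"
    unfolding ks'_def ps(2)[symmetric] by (rule dual_index_idx_of_pairs)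
  then have "admissible ks'"
    unfolding admissible_iff_idx_of_pairs using ps(1) by (intro exI[of _ "rev (map prod.swap ps)"]) simp
  have "connected_equiv \<alpha> \<beta> ks [] [] ks'"
    using connected_equiv_idx_of_pairs[OF assms(2,3), of "[]" ps "[]"] by (simp add: ps(2) ks')
  then have "connected_sum \<alpha> \<beta> ks [] = connected_sum \<beta> \<alpha> ks' []"
    using connected_summable_admissible[OF assms(2,3,1)] by (simp add: connected_equiv_def connected_sum_swap)
  then have "kappa \<alpha> \<beta> * Z ks \<alpha> \<beta> = kappa \<alpha> \<beta> * Z ks' \<beta> \<alpha>"
    by (simp add: connected_sum_admissible[OF assms(2,3,1)]
        connected_sum_admissible[OF assms(3,2) \<open>admissible ks'\<close>] kappa_swap)
  then show ?thesis
    using kappa_nonzero[OF assms(2,3)] by (simp add: ks'_def)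
qed

end
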